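(* Let $n\ge1$ and $\theta=[p](\tau_1,\dots,\tau_p)\in\Theta_n$. There is an isomorphism of $\Theta_n$-sets $\mathcal J(\theta)\cong\mathcal J'(\theta)$.
   Context: $\Theta_n=\Delta\wr\Theta_{n-1}$ ($\Theta_0$ terminal; $\Delta\wr\mathcal C$ has objects $[p](x_1,\dots,x_p)$ and morphisms given by $f:[p]\to[q]$ in $\Delta$ and morphisms $x_i\to y_j$ for $f(i-1)<j\le f(i)$); $\Theta_n$ is a full subcategory of strict $n$-categories, $N_n$ its nerve. We write $\theta$ also for the representable $\Theta_n[\theta]$. Let $I=[1]([0])$ (the representable $1$-globe) and $J=N_n(J_1)$, the nerve of the free groupoid on one arrow $0\to1$; the inclusion $I\to J$ picks the arrow $0\to1$. $\mathcal J(\theta):=\theta\times I\sqcup_{\theta_0\times I}\theta_0\times J$, where $\theta_0$ is the constant presheaf on the set $\Theta_n[\theta]_{[0]}$ of objects of $\theta$, mapped into $\theta$ in the evident (monomorphic) way. For $0\le i\le p$ let $\theta^i=[p+1](\tau_1,\dots,\tau_i,[0],\tau_{i+1},\dots,\tau_p)$; let $\alpha^i:\theta\to\theta^i$ ($0\le i\le p-1$) have underlying map skipping $i+1$, and $\beta^i:\theta\to\theta^i$ ($1\le i\le p$) underlying map skipping $i$, with identity components on the $\tau_j$ and the unique maps to $[0]$ on the inserted position. Let $\theta^i_J$ be the pushout of $\theta^i\leftarrow I\to J$, where $I\to\theta^i$ is the map with underlying $[1]\to[p+1]$, $0\mapsto i$, $1\mapsto i+1$, and $\varphi^i:\theta^i\to\theta^i_J$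 the induced map. $\mathcal J'(\theta)$ is the colimit of the diagram $\theta^0_J\xleftarrow{\varphi^0\alpha^0}\theta\xrightarrow{\varphi^1\beta^1}\theta^1_J\xleftarrow{\varphi^1\alpha^1}\theta\to\cdots\xleftarrow{\varphi^{p-1}\alpha^{p-1}}\theta\xrightarrow{\varphi^p\beta^p}\theta^p_J$. *)

theory Defs
  imports Main "HOL-Library.FuncSet"
begin

section \<open>The category Theta_n, concretely (iterated wreath product with Delta)\<close>

text \<open>Objects: an object [p](t_1,...,t_p) is the tree T [t_1,...,t_p]; [0] is T [].\<close>
datatype tree = T "tree list"

text \<open>Theta_0 is terminal (only T []); Theta_(n+1) = Delta wr Theta_n.\<close>
fun obj :: "nat \<Rightarrow> tree \<Rightarrow> bool" where
  "obj 0 (T ts) = (ts = [])"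
| "obj (Suc n) (T ts) = (\<forall>t\<in>set ts. obj n t)"

text \<open>Morphisms: H f cs, where f = [f(0),...,f(p)] is the underlying map [p] -> [q]
  of Delta and cs ! i (0-based component i, i.e. the paper's component i+1) lists the
  morphisms x_(i+1) -> y_j for f(i) < j <= f(i+1), in increasing order of j.\<close>
datatype hom = H "nat list" "hom list list"

inductive ishom :: "tree \<Rightarrow> tree \<Rightarrow> hom \<Rightarrow> bool" where
  "\<lbrakk> length f = Suc (length xs); \<forall>k<length f. f ! k \<le> length ys; sorted f;
     length cs = length xs;
     \<forall>i<length xs. length (cs ! i) = f ! Suc i - f ! i \<and>
        (\<forall>k<length (cs ! i). ishom (xs ! i) (ys ! (f ! i + k)) (cs ! i ! k)) \<rbrakk>
   \<Longrightarrow> ishom (T xs) (T ys) (H f cs)"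

text \<open>Composition: comp m2 m1 is m2 \<circ> m1 (first m1, then m2).\<close>
lemma size_mem_hom_list: "c \<in> set (l :: hom list) \<Longrightarrow> size c < size_list size l"
  by (induction l) auto

function comp :: "hom \<Rightarrow> hom \<Rightarrow> hom" where
  "comp (H g ds) (H f cs) =
     H (map (\<lambda>k. g ! k) f)
       (map (\<lambda>i. concat (map (\<lambda>k. map (\<lambda>d. comp d (cs ! i ! k)) (ds ! (f ! i + k)))
                              [0..<length (cs ! i)]))
            [0..<length cs])"
  by pat_completeness auto
termination
proof (relation "measure (\<lambda>(a, b). size b)")
  show "wf (measure (\<lambda>(a, b). size b))" by simp
next
  fix g ds f and cs :: "hom list list" and i k and d :: hom
  assume i: "i \<in> set [0..<length cs]" and k: "k \<in> set [0..<length (cs ! i)]"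
  have a1: "cs ! i \<in> set cs" using i by simp
  have a2: "cs ! i ! k \<in> set (cs ! i)" using k by simp
  have "size (cs ! i ! k) < size_list size (cs ! i)" using a2 by (rule size_mem_hom_list)
  also have "size_list size (cs ! i) \<le> size_list (size_list size) cs"
    using a1 by (simp add: size_list_estimation')
  finally have "size (cs ! i ! k) < size (H f cs)" by simp
  then show "((d, cs ! i ! k), H g ds, H f cs) \<in> measure (\<lambda>(a, b). size b)" by simp
qed

fun idh :: "tree \<Rightarrow> hom" where
  "idh (T xs) = H [0..<Suc (length xs)] (map (\<lambda>x. [idh x]) xs)"

fun bang :: "tree \<Rightarrow> hom" where
  "bang (T xs) = H (replicate (Suc (length xs)) 0) (replicate (length xs) [])"

section \<open>Theta_n-sets (presheaves), given by carriers and actions\<close>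

text \<open>A presheaf X: carrier fst X s, and snd X s t m : X(t) -> X(s) for m : s -> t.\<close>
type_synonym 'a psh = "(tree \<Rightarrow> 'a set) \<times> (tree \<Rightarrow> tree \<Rightarrow> hom \<Rightarrow> 'a \<Rightarrow> 'a)"

definition psh_iso :: "nat \<Rightarrow> 'a psh \<Rightarrow> 'b psh \<Rightarrow> bool" where
  "psh_iso n X Y = (\<exists>\<eta>. (\<forall>s. obj n s \<longrightarrow> bij_betw (\<eta> s) (fst X s) (fst Y s)) \<and>
     (\<forall>s t m x. obj n s \<and> obj n t \<and> ishom s t m \<and> x \<in> fst X t \<longrightarrow>
        \<eta> s (snd X s t m x) = snd Y s t m (\<eta> t x)))"

definition rep :: "tree \<Rightarrow> hom psh" where
  "rep \<theta> = (\<lambda>s. {m. ishom s \<theta> m}, \<lambda>s t m x. comp x m)"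

definition obs :: "tree \<Rightarrow> hom set" where
  "obs \<theta> = {m. ishom (T []) \<theta> m}"

definition prod_psh :: "'a psh \<Rightarrow> 'b psh \<Rightarrow> ('a \<times> 'b) psh" where
  "prod_psh X Y = (\<lambda>s. fst X s \<times> fst Y s, \<lambda>s t m (x, y). (snd X s t m x, snd Y s t m y))"

definition const_psh :: "'a set \<Rightarrow> 'a psh" where
  "const_psh S = (\<lambda>s. S, \<lambda>s t m x. x)"

definition qrel :: "(tree \<Rightarrow> ('a \<times> 'a) set) \<Rightarrow> tree \<Rightarrow> ('a \<times> 'a) set" where
  "qrel R s = (R s \<union> (R s)\<inverse>)\<^sup>*"

definition quot_psh :: "'a psh \<Rightarrow> (tree \<Rightarrow> ('a \<times> 'a) set) \<Rightarrow> 'a set psh" where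
  "quot_psh X R = (\<lambda>s. fst X s // qrel R s,
                   \<lambda>s t m Q. qrel R s `` {snd X s t m (SOME x. x \<in> Q)})"

definition cls :: "'a set psh \<Rightarrow> tree \<Rightarrow> 'a \<Rightarrow> 'a set" where
  "cls P s y = (THE Q. Q \<in> fst P s \<and> y \<in> Q)"

definition sum_psh :: "'a psh \<Rightarrow> 'b psh \<Rightarrow> ('a + 'b) psh" where
  "sum_psh A B = (\<lambda>s. fst A s <+> fst B s,
     \<lambda>s t m. case_sum (\<lambda>a. Inl (snd A s t m a)) (\<lambda>b. Inr (snd B s t m b)))"

definition pushout :: "'a psh \<Rightarrow> 'b psh \<Rightarrow> 'c psh \<Rightarrow> (tree \<Rightarrow> 'c \<Rightarrow> 'a) \<Rightarrow>
    (tree \<Rightarrow> 'c \<Rightarrow> 'b) \<Rightarrow> ('a + 'b) set psh" where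
  "pushout A B C f g = quot_psh (sum_psh A B)
     (\<lambda>s. {(Inl (f s c), Inr (g s c)) | c. c \<in> fst C s})"

section \<open>I, J and the map I -> J\<close>

definition Ic :: tree where "Ic = T [T []]"

definition Ipsh :: "hom psh" where "Ipsh = rep Ic"

text \<open>J = N_n(J_1). Since J_1 (the free groupoid on 0 -> 1, with only identity higher cells)
  has exactly one morphism between any two objects, an n-functor theta -> J_1 is the same as
  a map Ob(theta) -> {0,1}; we encode 0 as False and 1 as True.\<close>
definition Jpsh :: "(hom \<Rightarrow> bool) psh" where
  "Jpsh = (\<lambda>s. obs s \<rightarrow>\<^sub>E (UNIV :: bool set),
           \<lambda>s t m u. restrict (\<lambda>ob. u (comp m ob)) (obs s))"

text \<open>I -> J picks the arrow 0 -> 1: an s-cell x of I is sent to the functor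
  Ob(s) -> {0,1} sending an object o to the object of [1] that x maps it to.\<close>
definition IJ :: "tree \<Rightarrow> hom \<Rightarrow> (hom \<Rightarrow> bool)" where
  "IJ s x = restrict (\<lambda>ob. comp x ob = H [1] []) (obs s)"

section \<open>The Theta_n-set J(theta)\<close>

definition Theta0 :: "tree \<Rightarrow> hom psh" where
  "Theta0 \<theta> = const_psh (obs \<theta>)"

definition JJ :: "tree \<Rightarrow> ((hom \<times> hom) + (hom \<times> (hom \<Rightarrow> bool))) set psh" where
  "JJ \<theta> = pushout (prod_psh (rep \<theta>) Ipsh) (prod_psh (Theta0 \<theta>) Jpsh)
                  (prod_psh (Theta0 \<theta>) Ipsh)
                  (\<lambda>s (ob, x). (comp ob (bang s), x)) (\<lambda>s (ob, x). (ob, IJ s x))"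

section \<open>The Theta_n-set J'(theta)\<close>

definition children :: "tree \<Rightarrow> tree list" where
  "children \<theta> = (case \<theta> of T ts \<Rightarrow> ts)"

definition theta_i :: "tree \<Rightarrow> nat \<Rightarrow> tree" where
  "theta_i \<theta> i = T (take i (children \<theta>) @ [T []] @ drop i (children \<theta>))"

text \<open>The map theta -> theta^i whose underlying map skips sk, with identity components on
  the t_j and the unique map to the inserted [0] (at position i+1).\<close>
definition ins_map :: "tree \<Rightarrow> nat \<Rightarrow> nat \<Rightarrow> hom" where
  "ins_map \<theta> i sk =
    (let ts = children \<theta>; p = length ts; f = (\<lambda>k. if k < sk then k else Suc k) in
     H (map f [0..<Suc p])
       (map (\<lambda>k. map (\<lambda>j. if j = Suc i then bang (ts ! k) else idh (ts ! k))
                      [Suc (f k)..<Suc (f (Suc k))]) [0..<p]))"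

definition alpha :: "tree \<Rightarrow> nat \<Rightarrow> hom" where
  "alpha \<theta> i = ins_map \<theta> i (Suc i)"

definition beta :: "tree \<Rightarrow> nat \<Rightarrow> hom" where
  "beta \<theta> i = ins_map \<theta> i i"

definition e_i :: "nat \<Rightarrow> hom" where
  "e_i i = H [i, Suc i] [[idh (T [])]]"

definition thJ :: "tree \<Rightarrow> nat \<Rightarrow> (hom + (hom \<Rightarrow> bool)) set psh" where
  "thJ \<theta> i = pushout (rep (theta_i \<theta> i)) Jpsh Ipsh (\<lambda>s x. comp (e_i i) x) IJ"

definition phi :: "tree \<Rightarrow> nat \<Rightarrow> tree \<Rightarrow> hom \<Rightarrow> (hom + (hom \<Rightarrow> bool)) set" where
  "phi \<theta> i s y = cls (thJ \<theta> i) s (Inl y)"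

text \<open>Colimit of the zigzag
  theta^0_J <- theta -> theta^1_J <- theta -> ... <- theta -> theta^p_J:
  disjoint union of all vertices (the i-th middle copy of theta tagged (i, Inr _),
  0 <= i < p; theta^i_J tagged (i, Inl _)), modulo the generated equivalence.\<close>
definition Dzig :: "tree \<Rightarrow> (nat \<times> ((hom + (hom \<Rightarrow> bool)) set + hom)) psh" where
  "Dzig \<theta> = (\<lambda>s. {(i, Inl y) | i y. i \<le> length (children \<theta>) \<and> y \<in> fst (thJ \<theta> i) s}
                 \<union> {(i, Inr x) | i x. i < length (children \<theta>) \<and> x \<in> fst (rep \<theta>) s},
     \<lambda>s t m (i, z). (i, case z of Inl y \<Rightarrow> Inl (snd (thJ \<theta> i) s t m y)
                                | Inr x \<Rightarrow> Inr (snd (rep \<theta>) s t m x)))"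

definition Rzig :: "tree \<Rightarrow> tree \<Rightarrow>
    ((nat \<times> ((hom + (hom \<Rightarrow> bool)) set + hom)) \<times> (nat \<times> ((hom + (hom \<Rightarrow> bool)) set + hom))) set" where
  "Rzig \<theta> s =
     {((i, Inr x), (i, Inl (phi \<theta> i s (comp (alpha \<theta> i) x)))) | i x.
        i < length (children \<theta>) \<and> x \<in> fst (rep \<theta>) s}
   \<union> {((i, Inr x), (Suc i, Inl (phi \<theta> (Suc i) s (comp (beta \<theta> (Suc i)) x)))) | i x.
        i < length (children \<theta>) \<and> x \<in> fst (rep \<theta>) s}"

definition JJ' :: "tree \<Rightarrow> (nat \<times> ((hom + (hom \<Rightarrow> bool)) set + hom)) set psh" where
  "JJ' \<theta> = quot_psh (Dzig \<theta>) (Rzig \<theta>)"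

end

theory Submission
  imports Defs
begin

text \<open>
  Both \<J>(\<theta>) and \<J>'(\<theta>) map naturally to \<theta> \<times> J, and both maps are bijections onto the
  same sub-\<Theta>-set: the cells (x, u) for which x factors through an object of \<theta> or u comes
  from I. For \<J>(\<theta>) this is the usual description of a pushout along a monomorphism. For
  \<J>'(\<theta>), a cell z of \<theta>^i goes to (\<sigma>^i z, \<rho>^i z), where the codegeneracy \<sigma>^i : \<theta>^i \<rightarrow> \<theta>
  collapses the inserted vertex onto the vertex i and \<rho>^i : \<theta>^i \<rightarrow> I separates the vertices
  up to i from the others; a cell u of J goes to (the constant cell at i, u).
  Given x and u coming from I, the cells of \<theta>^i over (x, u) are lifts of x along \<sigma>^i, which
  exist exactly for the positions i separating the vertices sent to 1 by u from the others.
  These positions form an interval, and the lifts at adjacent positions i, i+1 are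
  \<alpha>^i x and \<beta>^(i+1) x, which the zigzag identifies through the i-th middle copy of \<theta>.
  A cell of J at position c over a constant x is identified with the lift of x at c.
\<close>

section \<open>Lists of indices\<close>

lemma all_less_diff_iff:
  "(\<forall>l<b - a. P (a + l)) \<longleftrightarrow> (\<forall>j. a \<le> j \<longrightarrow> j < b \<longrightarrow> P (j::nat))"
  by (metis add.commute le_add1 le_add_diff_inverse2 less_diff_conv)

lemma length_concat_map_upt:
  assumes "\<And>l. l < n \<Longrightarrow> length (F l) = a (Suc l) - a l"
    and "\<And>l l'. l \<le> l' \<Longrightarrow> l' \<le> n \<Longrightarrow> a l \<le> a l'" and "l \<le> n"
  shows "length (concat (map F [0..<l])) = a l - a 0"
  using assms(3)
proof (induction l)
  case (Suc l)
  have "a 0 \<le> a l" "a l \<le> a (Suc l)" using assms(2) Suc.prems by auto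
  then show ?case using Suc assms(1)[of l] by simp
qed simp

lemma nth_concat_map_upt:
  assumes "l < n" "r < length (F l)"
  shows "concat (map F [0..<n]) ! (length (concat (map F [0..<l])) + r) = F l ! r"
proof -
  have "[0..<n] = [0..<l] @ l # [Suc l..<n]"
    using upt_add_eq_append[of 0 l "n - l"] upt_conv_Cons[of l n] assms(1) by simp
  then show ?thesis using assms(2) by (simp add: nth_append)
qed

lemma obtain_step_index:
  fixes a :: "nat \<Rightarrow> nat"
  assumes "lo \<le> hi" "a lo \<le> x" "x < a hi"
  obtains j where "lo \<le> j" "j < hi" "a j \<le> x" "x < a (Suc j)"
proof -
  have "\<exists>j. lo \<le> j \<and> j < lo + d \<and> a j \<le> x \<and> x < a (Suc j)" if "x < a (lo + d)" for d
    using that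
  proof (induction d)
    case (Suc d)
    show ?case
    proof (cases "x < a (lo + d)")
      case True
      then show ?thesis using Suc.IH by force
    next
      case False
      then show ?thesis using Suc.prems by (intro exI[of _ "lo + d"]) simp
    qed
  qed (use assms(2) in simp)
  moreover have "hi = lo + (hi - lo)" using assms(1) by simp
  ultimately show ?thesis using that assms(3) by metis
qed

section \<open>Morphisms of \<Theta>\<close>

lemma ishom_H_iff:
  "ishom (T xs) (T ys) (H f cs) \<longleftrightarrow>
     length f = Suc (length xs) \<and> (\<forall>k<length f. f ! k \<le> length ys) \<and> sorted f \<and>
     length cs = length xs \<and>
     (\<forall>i<length xs. length (cs ! i) = f ! Suc i - f ! i \<and>
        (\<forall>k<f ! Suc i - f ! i. ishom (xs ! i) (ys ! (f ! i + k)) (cs ! i ! k)))"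
  by (subst ishom.simps) auto

fun base :: "hom \<Rightarrow> nat list" where "base (H f cs) = f"

fun comps :: "hom \<Rightarrow> hom list list" where "comps (H f cs) = cs"

text \<open>The component of m from the k-th child of its source to the j-th child of its target
  (both 0-based); meaningful for base m ! k \<le> j < base m ! Suc k.\<close>
definition cell :: "hom \<Rightarrow> nat \<Rightarrow> nat \<Rightarrow> hom" where
  "cell m k j = comps m ! k ! (j - base m ! k)"

lemma ishom_iff_cells:
  "ishom (T xs) (T ys) m \<longleftrightarrow>
     length (base m) = Suc (length xs) \<and> (\<forall>k<length (base m). base m ! k \<le> length ys) \<and>
     sorted (base m) \<and> length (comps m) = length xs \<and>
     (\<forall>k<length xs. length (comps m ! k) = base m ! Suc k - base m ! k \<and>
        (\<forall>j. base m ! k \<le> j \<longrightarrow> j < base m ! Suc k \<longrightarrow> ishom (xs ! k) (ys ! j) (cell m k j)))"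
proof (cases m)
  case (H f cs)
  have "(\<forall>l<f ! Suc k - f ! k. ishom (xs ! k) (ys ! (f ! k + l)) (cs ! k ! l)) \<longleftrightarrow>
        (\<forall>j. f ! k \<le> j \<longrightarrow> j < f ! Suc k \<longrightarrow> ishom (xs ! k) (ys ! j) (cell (H f cs) k j))" for k
    using all_less_diff_iff[of "f ! Suc k" "f ! k"
        "\<lambda>j. ishom (xs ! k) (ys ! j) (cs ! k ! (j - f ! k))"]
    by (simp add: cell_def)
  then show ?thesis using H by (simp add: ishom_H_iff)
qed

lemma ishom_base:
  assumes "ishom (T xs) (T ys) m"
  shows "length (base m) = Suc (length xs)" "\<And>k. k \<le> length xs \<Longrightarrow> base m ! k \<le> length ys"
    "\<And>k l. k \<le> l \<Longrightarrow> l \<le> length xs \<Longrightarrow> base m ! k \<le> base m ! l"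
  using assms by (auto simp: ishom_iff_cells sorted_iff_nth_mono)

lemma ishom_cell:
  "ishom (T xs) (T ys) m \<Longrightarrow> k < length xs \<Longrightarrow> base m ! k \<le> j \<Longrightarrow> j < base m ! Suc k \<Longrightarrow>
   ishom (xs ! k) (ys ! j) (cell m k j)"
  by (simp add: ishom_iff_cells)

lemma hom_eqI:
  assumes m1: "ishom (T xs) t m1" and m2: "ishom (T xs) t m2" and base: "base m1 = base m2"
    and cells: "\<And>k j. k < length xs \<Longrightarrow> base m1 ! k \<le> j \<Longrightarrow> j < base m1 ! Suc k \<Longrightarrow>
      cell m1 k j = cell m2 k j"
  shows "m1 = m2"
proof -
  obtain ys where t: "t = T ys" by (cases t)
  obtain f cs where H1: "m1 = H f cs" by (cases m1)
  obtain cs' where H2: "m2 = H f cs'" using base H1 by (cases m2) simp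
  note c1 = m1[unfolded t ishom_iff_cells] and c2 = m2[unfolded t ishom_iff_cells]
  have "cs ! k ! l = cs' ! k ! l" if "k < length xs" "l < f ! Suc k - f ! k" for k l
    using cells[of k "f ! k + l"] that H1 H2 by (simp add: cell_def)
  then have "cs = cs'"
    using c1 c2 H1 H2 by (auto intro!: nth_equalityI)
  then show ?thesis using H1 H2 by simp
qed

lemma base_comp: "base (comp m2 m1) = map ((!) (base m2)) (base m1)"
  by (cases m1, cases m2) (simp add: comp.simps)

lemma length_comps_comp: "length (comps (comp m (H f cs))) = length cs"
  by (cases m) (simp add: comp.simps)

lemma comps_comp:
  "comps (comp (H g ds) (H f cs)) ! k =
     concat (map (\<lambda>l. map (\<lambda>d. comp d (cs ! k ! l)) (ds ! (f ! k + l))) [0..<length (cs ! k)])"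
  if "k < length cs"
  using that by (simp add: comp.simps)

declare comp.simps [simp del]

lemma cell_comp:
  assumes m1: "ishom (T xs) (T ys) m1" and m2: "ishom (T ys) (T zs) m2" and k: "k < length xs"
    and j: "base m1 ! k \<le> j" "j < base m1 ! Suc k"
    and jj: "base m2 ! j \<le> jj" "jj < base m2 ! Suc j"
  shows "cell (comp m2 m1) k jj = comp (cell m2 j jj) (cell m1 k j)"
proof -
  obtain f cs where H1: "m1 = H f cs" by (cases m1)
  obtain g ds where H2: "m2 = H g ds" by (cases m2)
  define F where "F = (\<lambda>l. map (\<lambda>d. comp d (cs ! k ! l)) (ds ! (f ! k + l)))"
  define n where "n = f ! Suc k - f ! k"
  define l where "l = j - f ! k"
  have len_cs: "k < length cs" "length (cs ! k) = n"
    using m1 k H1 unfolding n_def by (simp_all add: ishom_iff_cells)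
  have len_ds: "length (ds ! i) = g ! Suc i - g ! i" if "i < length ys" for i
    using m2 that H2 by (simp add: ishom_iff_cells)
  have fk: "f ! k \<le> f ! Suc k" "f ! Suc k \<le> length ys"
    using ishom_base[OF m1] k H1 by auto
  have gmono: "g ! a \<le> g ! b" if "a \<le> b" "b \<le> length ys" for a b
    using ishom_base(3)[OF m2 that] H2 by simp
  have lenF: "length (F i) = g ! (f ! k + Suc i) - g ! (f ! k + i)" if "i < n" for i
    using len_ds[of "f ! k + i"] that fk unfolding F_def n_def by simp
  have prefix: "length (concat (map F [0..<l])) = g ! j - g ! (f ! k)"
    using length_concat_map_upt[of n F "\<lambda>i. g ! (f ! k + i)" l] lenF gmono fk j H1
    unfolding n_def l_def by simp
  have "k < length f" using ishom_base(1)[OF m1] k H1 by simp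
  then have "cell (comp m2 m1) k jj = concat (map F [0..<n]) ! (jj - g ! (f ! k))"
    using len_cs H1 H2 unfolding cell_def F_def by (simp add: comps_comp base_comp)
  also have "jj - g ! (f ! k) = length (concat (map F [0..<l])) + (jj - g ! j)"
    using prefix gmono[of "f ! k" j] jj j fk H1 H2 by simp
  also have "concat (map F [0..<n]) ! \<dots> = F l ! (jj - g ! j)"
    using lenF[of l] j jj H1 H2 unfolding n_def l_def by (intro nth_concat_map_upt) auto
  also have "\<dots> = comp (cell m2 j jj) (cell m1 k j)"
    using j jj fk len_ds[of j] H1 H2 by (simp add: F_def l_def cell_def)
  finally show ?thesis .
qed

lemma obtain_cell_comp:
  assumes m1: "ishom (T xs) (T ys) m1" and m2: "ishom (T ys) (T zs) m2" and k: "k < length xs"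
    and jj: "base m2 ! (base m1 ! k) \<le> jj" "jj < base m2 ! (base m1 ! Suc k)"
  obtains j where "base m1 ! k \<le> j" "j < base m1 ! Suc k" "base m2 ! j \<le> jj" "jj < base m2 ! Suc j"
    "cell (comp m2 m1) k jj = comp (cell m2 j jj) (cell m1 k j)"
proof -
  obtain j where "base m1 ! k \<le> j" "j < base m1 ! Suc k" "base m2 ! j \<le> jj" "jj < base m2 ! Suc j"
    using obtain_step_index[of "base m1 ! k" "base m1 ! Suc k" "(!) (base m2)" jj]
      ishom_base(3)[OF m1, of k "Suc k"] k jj by auto
  then show thesis using that cell_comp[OF m1 m2 k] by blast
qed

lemma length_comps_comp_nth:
  assumes m1: "ishom (T xs) (T ys) m1" and m2: "ishom (T ys) (T zs) m2" and k: "k < length xs"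
  shows "length (comps (comp m2 m1) ! k) = base m2 ! (base m1 ! Suc k) - base m2 ! (base m1 ! k)"
proof -
  obtain f cs where H1: "m1 = H f cs" by (cases m1)
  obtain g ds where H2: "m2 = H g ds" by (cases m2)
  define F where "F = (\<lambda>l. map (\<lambda>d. comp d (cs ! k ! l)) (ds ! (f ! k + l)))"
  define n where "n = f ! Suc k - f ! k"
  have len_cs: "k < length cs" "length (cs ! k) = n"
    using m1 k H1 unfolding n_def by (simp_all add: ishom_iff_cells)
  have fk: "f ! k \<le> f ! Suc k" "f ! Suc k \<le> length ys"
    using ishom_base[OF m1] k H1 by auto
  have gmono: "g ! a \<le> g ! b" if "a \<le> b" "b \<le> length ys" for a b
    using ishom_base(3)[OF m2 that] H2 by simp
  have lenF: "length (F i) = g ! (f ! k + Suc i) - g ! (f ! k + i)" if "i < n" for i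
    using m2 that fk H2 unfolding F_def n_def by (simp add: ishom_iff_cells)
  have "length (concat (map F [0..<n])) = g ! (f ! Suc k) - g ! (f ! k)"
    using length_concat_map_upt[of n F "\<lambda>i. g ! (f ! k + i)" n] lenF gmono fk
    unfolding n_def by simp
  then show ?thesis using len_cs H1 H2 unfolding F_def by (simp add: comps_comp)
qed

lemma ishom_cell_induct [consumes 1, case_names hom]:
  assumes "ishom s t m"
    and "\<And>xs ys m. ishom (T xs) (T ys) m \<Longrightarrow>
      (\<And>k j. k < length xs \<Longrightarrow> base m ! k \<le> j \<Longrightarrow> j < base m ! Suc k \<Longrightarrow>
        P (xs ! k) (ys ! j) (cell m k j)) \<Longrightarrow> P (T xs) (T ys) m"
  shows "P s t m"
  using assms(1)
proof (induction rule: ishom.induct)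
  case (1 f xs ys cs)
  have m: "ishom (T xs) (T ys) (H f cs)"
    using 1(1-5) by (simp add: ishom_H_iff)
  show ?case
  proof (rule assms(2)[OF m])
    fix k j assume "k < length xs" "base (H f cs) ! k \<le> j" "j < base (H f cs) ! Suc k"
    then show "P (xs ! k) (ys ! j) (cell (H f cs) k j)"
      using 1(5) all_less_diff_iff[of "f ! Suc k" "f ! k"
          "\<lambda>j. P (xs ! k) (ys ! j) (cs ! k ! (j - f ! k))"]
      by (simp add: cell_def)
  qed
qed

lemma ishom_comp: "ishom a b m1 \<Longrightarrow> ishom b c m2 \<Longrightarrow> ishom a c (comp m2 m1)"
proof (induction a b m1 arbitrary: c m2 rule: ishom_cell_induct)
  case (hom xs ys m1)
  obtain zs where c: "c = T zs" by (cases c)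
  have m2: "ishom (T ys) (T zs) m2" using hom.prems c by simp
  have cells: "ishom (xs ! k) (zs ! jj) (cell (comp m2 m1) k jj)"
    if k: "k < length xs" and jj: "base m2 ! (base m1 ! k) \<le> jj" "jj < base m2 ! (base m1 ! Suc k)"
    for k jj
  proof -
    obtain j where j: "base m1 ! k \<le> j" "j < base m1 ! Suc k" "base m2 ! j \<le> jj"
        "jj < base m2 ! Suc j"
      and cell_eq: "cell (comp m2 m1) k jj = comp (cell m2 j jj) (cell m1 k j)"
      by (rule obtain_cell_comp[OF hom.hyps m2 k jj])
    have "j < length ys" using j(2) ishom_base(2)[OF hom.hyps, of "Suc k"] k by simp
    then show ?thesis
      using cell_eq hom.IH[OF k j(1,2) ishom_cell[OF m2 _ j(3,4)]] by simp
  qed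
  have "length (comps (comp m2 m1)) = length xs"
    using hom.hyps by (cases m1) (simp add: length_comps_comp ishom_H_iff)
  then show ?case
    unfolding c ishom_iff_cells
    using ishom_base[OF hom.hyps] ishom_base[OF m2] cells length_comps_comp_nth[OF hom.hyps m2]
    by (auto simp: base_comp sorted_iff_nth_mono)
qed

lemma obtain_cell_comp3:
  assumes m1: "ishom (T xs) (T ys) m1" and m2: "ishom (T ys) (T zs) m2"
    and m3: "ishom (T zs) (T ws) m3" and k: "k < length xs"
    and jj: "base (comp m3 (comp m2 m1)) ! k \<le> jj" "jj < base (comp m3 (comp m2 m1)) ! Suc k"
  obtains j i where "base m1 ! k \<le> j" "j < base m1 ! Suc k" "base m2 ! j \<le> i"
    "i < base m2 ! Suc j" "base m3 ! i \<le> jj" "jj < base m3 ! Suc i"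
    "cell (comp m3 (comp m2 m1)) k jj = comp (cell m3 i jj) (comp (cell m2 j i) (cell m1 k j))"
    "cell (comp (comp m3 m2) m1) k jj = comp (comp (cell m3 i jj) (cell m2 j i)) (cell m1 k j)"
proof -
  have m21: "ishom (T xs) (T zs) (comp m2 m1)" by (rule ishom_comp[OF m1 m2])
  have jj': "base m3 ! (base (comp m2 m1) ! k) \<le> jj" "jj < base m3 ! (base (comp m2 m1) ! Suc k)"
    using jj ishom_base(1)[OF m1] k by (simp_all add: base_comp)
  obtain i where i: "base (comp m2 m1) ! k \<le> i" "i < base (comp m2 m1) ! Suc k"
      "base m3 ! i \<le> jj" "jj < base m3 ! Suc i"
    and cell_321: "cell (comp m3 (comp m2 m1)) k jj = comp (cell m3 i jj) (cell (comp m2 m1) k i)"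
    by (rule obtain_cell_comp[OF m21 m3 k jj'])
  have i': "base m2 ! (base m1 ! k) \<le> i" "i < base m2 ! (base m1 ! Suc k)"
    using i(1,2) ishom_base(1)[OF m1] k by (simp_all add: base_comp)
  obtain j where j: "base m1 ! k \<le> j" "j < base m1 ! Suc k" "base m2 ! j \<le> i"
      "i < base m2 ! Suc j"
    and cell_21: "cell (comp m2 m1) k i = comp (cell m2 j i) (cell m1 k j)"
    by (rule obtain_cell_comp[OF m1 m2 k i'])
  have jl: "j < length ys" using j(2) ishom_base(2)[OF m1, of "Suc k"] k by simp
  have il: "i < length zs"
    using i'(2) ishom_base(2)[OF m2, of "base m1 ! Suc k"] ishom_base(2)[OF m1, of "Suc k"] k
    by simp
  have jj_j: "base (comp m3 m2) ! j \<le> jj" "jj < base (comp m3 m2) ! Suc j"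
    using ishom_base(1)[OF m2] jl il i j(3,4) ishom_base(3)[OF m3 j(3)]
      ishom_base(3)[OF m3, of "Suc i" "base m2 ! Suc j"] ishom_base(2)[OF m2, of "Suc j"]
    by (simp_all add: base_comp)
  have "cell (comp (comp m3 m2) m1) k jj = comp (cell (comp m3 m2) j jj) (cell m1 k j)"
    using cell_comp[OF m1 ishom_comp[OF m2 m3] k j(1,2) jj_j] .
  also have "cell (comp m3 m2) j jj = comp (cell m3 i jj) (cell m2 j i)"
    using cell_comp[OF m2 m3 jl j(3,4) i(3,4)] .
  finally show thesis using that[OF j i(3,4)] cell_321 cell_21 by simp
qed

lemma comp_assoc:
  "ishom a b m1 \<Longrightarrow> ishom b c m2 \<Longrightarrow> ishom c d m3 \<Longrightarrow>
   comp m3 (comp m2 m1) = comp (comp m3 m2) m1"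
proof (induction a b m1 arbitrary: c d m2 m3 rule: ishom_cell_induct)
  case (hom xs ys m1)
  obtain zs ws where c: "c = T zs" and d: "d = T ws" by (cases c, cases d)
  have m2: "ishom (T ys) (T zs) m2" and m3: "ishom (T zs) (T ws) m3"
    using hom.prems c d by simp_all
  have "x < length (base m2)" if "x \<in> set (base m1)" for x
    using that ishom_base(1,2)[OF hom.hyps] ishom_base(1)[OF m2]
    by (force simp: in_set_conv_nth less_Suc_eq_le)
  then have base_eq: "base (comp m3 (comp m2 m1)) = base (comp (comp m3 m2) m1)"
    by (simp add: base_comp)
  show ?case
  proof (rule hom_eqI[OF ishom_comp[OF ishom_comp[OF hom.hyps m2] m3]
        ishom_comp[OF hom.hyps ishom_comp[OF m2 m3]] base_eq])
    fix k jj
    assume k: "k < length xs" and jj: "base (comp m3 (comp m2 m1)) ! k \<le> jj"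
      "jj < base (comp m3 (comp m2 m1)) ! Suc k"
    obtain j i where j: "base m1 ! k \<le> j" "j < base m1 ! Suc k" "base m2 ! j \<le> i"
        "i < base m2 ! Suc j" and i: "base m3 ! i \<le> jj" "jj < base m3 ! Suc i"
      and cells: "cell (comp m3 (comp m2 m1)) k jj =
          comp (cell m3 i jj) (comp (cell m2 j i) (cell m1 k j))"
        "cell (comp (comp m3 m2) m1) k jj = comp (comp (cell m3 i jj) (cell m2 j i)) (cell m1 k j)"
      by (rule obtain_cell_comp3[OF hom.hyps m2 m3 k jj])
    have jl: "j < length ys" using j(2) ishom_base(2)[OF hom.hyps, of "Suc k"] k by simp
    have il: "i < length zs" using j(4) ishom_base(2)[OF m2, of "Suc j"] jl by simp
    show "cell (comp m3 (comp m2 m1)) k jj = cell (comp (comp m3 m2) m1) k jj"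
      using cells hom.IH[OF k j(1,2) ishom_cell[OF m2 jl j(3,4)] ishom_cell[OF m3 il i]] by simp
  qed
qed

lemma ishom_idh: "ishom t t (idh t)"
proof (induction t)
  case (T xs)
  show ?case
    by (simp add: ishom_H_iff nth_append del: upt_Suc)
      (use T in \<open>auto simp: nth_append sorted_append\<close>)
qed

lemma cell_idh: "j < length ys \<Longrightarrow> cell (idh (T ys)) j j = idh (ys ! j)"
  by (simp add: cell_def del: upt_Suc)

lemma comp_idh_left: "ishom s t m \<Longrightarrow> comp (idh t) m = m"
proof (induction rule: ishom_cell_induct)
  case (hom xs ys m)
  have m_le: "base m ! k \<le> length ys" if "k \<le> length xs" for k
    using ishom_base(2)[OF hom.hyps that] .
  have base_eq: "base (comp (idh (T ys)) m) = base m"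
    using ishom_base(1)[OF hom.hyps] m_le
    by (auto simp: base_comp nth_upt less_Suc_eq_le simp del: upt_Suc intro!: nth_equalityI)
  show ?case
  proof (rule hom_eqI[OF ishom_comp[OF hom.hyps ishom_idh] hom.hyps base_eq])
    fix k j assume k: "k < length xs" and j: "base (comp (idh (T ys)) m) ! k \<le> j"
      "j < base (comp (idh (T ys)) m) ! Suc k"
    have jr: "base m ! k \<le> j" "j < base m ! Suc k" using j base_eq by simp_all
    have jl: "j < length ys" using jr m_le[of "Suc k"] k by simp
    have "cell (comp (idh (T ys)) m) k j = comp (idh (ys ! j)) (cell m k j)"
      using cell_comp[OF hom.hyps ishom_idh[of "T ys"] k jr, of j] jl cell_idh[OF jl]
      by (simp add: nth_upt del: upt_Suc)
    then show "cell (comp (idh (T ys)) m) k j = cell m k j"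
      using hom.IH[OF k jr] by simp
  qed
qed

lemma ishom_bang: "ishom s (T []) (bang s)"
  by (cases s) (simp add: ishom_H_iff nth_Cons' del: replicate_Suc)

lemma ishom_to_point_eq_bang: "ishom s (T []) m \<Longrightarrow> m = bang s"
proof -
  assume a: "ishom s (T []) m"
  obtain xs where s: "s = T xs" by (cases s)
  obtain f cs where m: "m = H f cs" by (cases m)
  have "f = replicate (Suc (length xs)) 0" using a unfolding s m ishom_H_iff
    by (intro nth_equalityI) (auto simp del: replicate_Suc)
  moreover have "cs = replicate (length xs) []" using a unfolding s m ishom_H_iff
    by (intro nth_equalityI) auto
  ultimately show ?thesis using s m by simp
qed

lemma comp_bang: "ishom s t m \<Longrightarrow> comp (bang t) m = bang s"
  using ishom_comp[OF _ ishom_bang] ishom_to_point_eq_bang by blast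

lemma ishom_from_point_iff: "ishom (T []) (T ys) m \<longleftrightarrow> (\<exists>k\<le>length ys. m = H [k] [])"
proof
  assume a: "ishom (T []) (T ys) m"
  obtain f cs where m: "m = H f cs" by (cases m)
  have "length f = 1" "cs = []" "f ! 0 \<le> length ys" using a unfolding m ishom_H_iff by auto
  then show "\<exists>k\<le>length ys. m = H [k] []" using m
    by (metis One_nat_def length_0_conv length_Suc_conv nth_Cons_0)
qed (auto simp: ishom_H_iff)

lemma ishom_point: "k \<le> length ts \<Longrightarrow> ishom (T []) (T ts) (H [k] [])"
  by (simp add: ishom_from_point_iff)

lemma comp_point: "comp (H g ds) (H [k] []) = H [g ! k] []"
  by (simp add: comp.simps)

definition mk_hom :: "nat \<Rightarrow> (nat \<Rightarrow> nat) \<Rightarrow> (nat \<Rightarrow> nat \<Rightarrow> hom) \<Rightarrow> hom" where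
  "mk_hom n F C = H (map F [0..<Suc n]) (map (\<lambda>k. map (C k) [F k..<F (Suc k)]) [0..<n])"

lemma length_base_mk_hom [simp]: "length (base (mk_hom n F C)) = Suc n"
  by (simp add: mk_hom_def)

lemma base_mk_hom: "k \<le> n \<Longrightarrow> base (mk_hom n F C) ! k = F k"
  by (simp add: mk_hom_def nth_append del: upt_Suc)

lemma cell_mk_hom: "k < n \<Longrightarrow> F k \<le> j \<Longrightarrow> j < F (Suc k) \<Longrightarrow> cell (mk_hom n F C) k j = C k j"
  by (simp add: mk_hom_def cell_def nth_append del: upt_Suc)

lemma ishom_mk_hom:
  assumes "\<And>k. k \<le> length xs \<Longrightarrow> F k \<le> length ys"
    and "\<And>k l. k \<le> l \<Longrightarrow> l \<le> length xs \<Longrightarrow> F k \<le> F l"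
    and "\<And>k j. k < length xs \<Longrightarrow> F k \<le> j \<Longrightarrow> j < F (Suc k) \<Longrightarrow> ishom (xs ! k) (ys ! j) (C k j)"
  shows "ishom (T xs) (T ys) (mk_hom (length xs) F C)"
  using assms
  by (auto simp: mk_hom_def ishom_H_iff sorted_iff_nth_mono nth_append less_Suc_eq_le
      simp del: upt_Suc)

definition const_hom :: "tree \<Rightarrow> nat \<Rightarrow> hom" where
  "const_hom s c = comp (H [c] []) (bang s)"

lemma base_const_hom: "k \<le> length xs \<Longrightarrow> base (const_hom (T xs) c) ! k = c"
  by (simp add: const_hom_def base_comp del: replicate_Suc)

lemma const_hom_inj:
  assumes "const_hom (T xs) c = const_hom (T xs) c'"
  shows "c = c'"
proof -
  have "c = base (const_hom (T xs) c) ! 0" by (simp add: base_const_hom)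
  also have "\<dots> = base (const_hom (T xs) c') ! 0" by (simp only: assms)
  also have "\<dots> = c'" by (simp add: base_const_hom)
  finally show ?thesis .
qed

lemma ishom_const_hom: "c \<le> length ts \<Longrightarrow> ishom s (T ts) (const_hom s c)"
  unfolding const_hom_def by (rule ishom_comp[OF ishom_bang]) (simp add: ishom_from_point_iff)

lemma comp_const_right:
  assumes c: "ishom (T []) \<theta> c" and m: "ishom s t m"
  shows "comp (comp c (bang t)) m = comp c (bang s)"
proof -
  have "comp (comp c (bang t)) m = comp c (comp (bang t) m)"
    using comp_assoc[OF m ishom_bang c] by (rule sym)
  then show ?thesis by (simp only: comp_bang[OF m])
qed

lemma comp_const_hom: "ishom s t m \<Longrightarrow> comp (const_hom t c) m = const_hom s c"
  unfolding const_hom_def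
  by (rule comp_const_right[of "T (replicate c (T []))"]) (simp_all add: ishom_from_point_iff)

lemma const_point_inj:
  assumes c1: "ishom (T []) \<theta> c1" and c2: "ishom (T []) \<theta> c2"
    and eq: "comp c1 (bang s) = comp c2 (bang s)"
  shows "c1 = c2"
proof -
  obtain ys where th: "\<theta> = T ys" by (cases \<theta>)
  obtain xs where s: "s = T xs" by (cases s)
  obtain k1 k2 where k: "c1 = H [k1] []" "c2 = H [k2] []"
    using c1 c2 unfolding th ishom_from_point_iff by blast
  then have "const_hom (T xs) k1 = const_hom (T xs) k2"
    using eq s unfolding const_hom_def by simp
  then show ?thesis using const_hom_inj k by simp
qed

section \<open>\<Theta>-sets and their quotients\<close>

lemma Inl_in_Plus_iff [simp]: "Inl a \<in> A <+> B \<longleftrightarrow> a \<in> A" by auto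

lemma Inr_in_Plus_iff [simp]: "Inr b \<in> A <+> B \<longleftrightarrow> b \<in> B" by auto

definition psh_closed :: "'a psh \<Rightarrow> bool" where
  "psh_closed X = (\<forall>s t m a. ishom s t m \<and> a \<in> fst X t \<longrightarrow> snd X s t m a \<in> fst X s)"

definition psh_natural :: "'a psh \<Rightarrow> 'b psh \<Rightarrow> (tree \<Rightarrow> 'a \<Rightarrow> 'b) \<Rightarrow> bool" where
  "psh_natural X Y \<Phi> \<longleftrightarrow>
     (\<forall>s t m a. ishom s t m \<and> a \<in> fst X t \<longrightarrow> \<Phi> s (snd X s t m a) = snd Y s t m (\<Phi> t a))"

definition psh_iso_by :: "'a psh \<Rightarrow> 'b psh \<Rightarrow> (tree \<Rightarrow> 'a \<Rightarrow> 'b) \<Rightarrow> bool" where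
  "psh_iso_by X Y \<eta> = ((\<forall>s. bij_betw (\<eta> s) (fst X s) (fst Y s)) \<and> psh_natural X Y \<eta>)"

lemma psh_iso_by_imp_psh_iso: "psh_iso_by X Y \<eta> \<Longrightarrow> psh_iso n X Y"
  unfolding psh_iso_by_def psh_iso_def psh_natural_def by blast

lemma psh_iso_by_inv:
  assumes iso: "psh_iso_by X Y \<eta>" and closed: "psh_closed X"
  shows "psh_iso_by Y X (\<lambda>s. inv_into (fst X s) (\<eta> s))"
  unfolding psh_iso_by_def
proof (intro conjI allI)
  fix s show "bij_betw (inv_into (fst X s) (\<eta> s)) (fst Y s) (fst X s)"
    using iso bij_betw_inv_into unfolding psh_iso_by_def by blast
next
  show "psh_natural Y X (\<lambda>s. inv_into (fst X s) (\<eta> s))"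
    unfolding psh_natural_def
  proof (intro allI impI)
    fix s t m b assume h: "ishom s t m \<and> b \<in> fst Y t"
    have bij: "bij_betw (\<eta> s) (fst X s) (fst Y s)" "bij_betw (\<eta> t) (fst X t) (fst Y t)"
      using iso unfolding psh_iso_by_def by auto
    define a where "a = inv_into (fst X t) (\<eta> t) b"
    have a: "a \<in> fst X t" "\<eta> t a = b"
      using h bij(2) unfolding a_def bij_betw_def by (auto intro: inv_into_into f_inv_into_f)
    have "snd Y s t m b = \<eta> s (snd X s t m a)"
      using iso h a unfolding psh_iso_by_def psh_natural_def by metis
    moreover have "snd X s t m a \<in> fst X s" using closed h a unfolding psh_closed_def by blast
    ultimately show "inv_into (fst X s) (\<eta> s) (snd Y s t m b) =
        snd X s t m (inv_into (fst X t) (\<eta> t) b)"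
      using bij(1) unfolding a_def[symmetric] by (simp add: bij_betw_def inv_into_f_f)
  qed
qed

lemma psh_iso_by_comp:
  assumes XY: "psh_iso_by X Y \<eta>" and YZ: "psh_iso_by Y Z \<zeta>"
  shows "psh_iso_by X Z (\<lambda>s a. \<zeta> s (\<eta> s a))"
  unfolding psh_iso_by_def psh_natural_def
proof (intro conjI allI impI)
  fix s show "bij_betw (\<lambda>a. \<zeta> s (\<eta> s a)) (fst X s) (fst Z s)"
    using XY YZ bij_betw_trans[of "\<eta> s" _ _ "\<zeta> s"] unfolding psh_iso_by_def o_def by blast
next
  fix s t m a assume h: "ishom s t m \<and> a \<in> fst X t"
  then have "\<eta> t a \<in> fst Y t" using XY unfolding psh_iso_by_def bij_betw_def by blast
  then show "\<zeta> s (\<eta> s (snd X s t m a)) = snd Z s t m (\<zeta> t (\<eta> t a))"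
    using XY YZ h unfolding psh_iso_by_def psh_natural_def by metis
qed

lemma qrel_refl[simp]: "(a, a) \<in> qrel R s" by (simp add: qrel_def)

lemma qrel_sym: "(a, b) \<in> qrel R s \<Longrightarrow> (b, a) \<in> qrel R s"
  unfolding qrel_def by (metis converse_Un converse_converse rtrancl_converseI sup_commute)

lemma qrel_trans: "(a, b) \<in> qrel R s \<Longrightarrow> (b, c) \<in> qrel R s \<Longrightarrow> (a, c) \<in> qrel R s"
  unfolding qrel_def by auto

lemma qrel_base: "(a, b) \<in> R s \<Longrightarrow> (a, b) \<in> qrel R s"
  unfolding qrel_def by auto

lemma qrel_base_sym: "(a, b) \<in> R s \<Longrightarrow> (b, a) \<in> qrel R s"
  unfolding qrel_def by auto

lemma qrel_invariant:
  assumes "\<And>a b. (a, b) \<in> R s \<Longrightarrow> \<Phi> a = \<Phi> b" and "(a, b) \<in> qrel R s"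
  shows "\<Phi> a = \<Phi> b"
  using assms(2) unfolding qrel_def
proof (induction rule: rtrancl_induct)
  case (step y z) then show ?case using assms(1) by auto
qed simp

lemma qrel_stays_in:
  assumes "\<And>a b. (a, b) \<in> R s \<Longrightarrow> a \<in> A \<and> b \<in> A" and "(a, b) \<in> qrel R s" and "a \<in> A"
  shows "b \<in> A"
  using assms(2,3) unfolding qrel_def
proof (induction rule: rtrancl_induct)
  case (step y z) then show ?case using assms(1) by auto
qed simp

lemma qrel_class_eq: "(a, b) \<in> qrel R s \<Longrightarrow> qrel R s `` {a} = qrel R s `` {b}"
  by (auto intro: qrel_trans qrel_sym)

definition rel_on :: "'a psh \<Rightarrow> (tree \<Rightarrow> ('a \<times> 'a) set) \<Rightarrow> bool" where
  "rel_on X R = (\<forall>s a b. (a, b) \<in> R s \<longrightarrow> a \<in> fst X s \<and> b \<in> fst X s)"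

lemma quot_psh_carrier: "fst (quot_psh X R) s = fst X s // qrel R s"
  by (simp add: quot_psh_def)

lemma quot_psh_act: "snd (quot_psh X R) s t m Q = qrel R s `` {snd X s t m (SOME x. x \<in> Q)}"
  by (simp add: quot_psh_def)

lemma class_in_quot_psh: "a \<in> fst X s \<Longrightarrow> qrel R s `` {a} \<in> fst (quot_psh X R) s"
  by (simp add: quot_psh_carrier quotientI)

lemma quot_psh_elem:
  assumes "rel_on X R" "Q \<in> fst (quot_psh X R) s"
  obtains a where "a \<in> fst X s" "Q = qrel R s `` {a}"
  using assms by (auto simp: quot_psh_carrier quotient_def)

lemma some_in_qrel_class:
  assumes "rel_on X R" "a \<in> fst X s"
  shows "(SOME x. x \<in> qrel R s `` {a}) \<in> fst X s \<and> (a, SOME x. x \<in> qrel R s `` {a}) \<in> qrel R s"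
proof -
  have "a \<in> qrel R s `` {a}" by simp
  then have "(SOME x. x \<in> qrel R s `` {a}) \<in> qrel R s `` {a}" by (rule someI)
  then have h: "(a, SOME x. x \<in> qrel R s `` {a}) \<in> qrel R s" by simp
  moreover have "(SOME x. x \<in> qrel R s `` {a}) \<in> fst X s"
    by (rule qrel_stays_in[OF _ h assms(2)]) (use assms(1) in \<open>auto simp: rel_on_def\<close>)
  ultimately show ?thesis by simp
qed

lemma cls_quot_psh:
  assumes "rel_on X R" "a \<in> fst X s"
  shows "cls (quot_psh X R) s a = qrel R s `` {a}"
  unfolding cls_def
proof (rule the_equality)
  show "qrel R s `` {a} \<in> fst (quot_psh X R) s \<and> a \<in> qrel R s `` {a}"
    using class_in_quot_psh[OF assms(2)] by simp
next
  fix Q assume "Q \<in> fst (quot_psh X R) s \<and> a \<in> Q"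
  then obtain b where "Q = qrel R s `` {b}" "a \<in> Q" using quot_psh_elem[OF assms(1)] by metis
  then show "Q = qrel R s `` {a}" using qrel_class_eq by fastforce
qed

lemma quot_psh_closed:
  assumes "rel_on X R" "psh_closed X"
  shows "psh_closed (quot_psh X R)"
  unfolding psh_closed_def
proof (intro allI impI)
  fix s t m Q assume h: "ishom s t m \<and> Q \<in> fst (quot_psh X R) t"
  then obtain a where a: "a \<in> fst X t" "Q = qrel R t `` {a}"
    using quot_psh_elem[OF assms(1)] by metis
  have "(SOME x. x \<in> Q) \<in> fst X t" using some_in_qrel_class[OF assms(1) a(1)] a(2) by simp
  then show "snd (quot_psh X R) s t m Q \<in> fst (quot_psh X R) s"
    using assms(2) h unfolding quot_psh_act psh_closed_def by (blast intro: class_in_quot_psh)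
qed

definition quot_map :: "(tree \<Rightarrow> 'a \<Rightarrow> 'b) \<Rightarrow> tree \<Rightarrow> 'a set \<Rightarrow> 'b" where
  "quot_map \<Phi> s Q = \<Phi> s (SOME a. a \<in> Q)"

definition rel_invariant :: "(tree \<Rightarrow> ('a \<times> 'a) set) \<Rightarrow> (tree \<Rightarrow> 'a \<Rightarrow> 'b) \<Rightarrow> bool" where
  "rel_invariant R \<Phi> = (\<forall>s a b. (a, b) \<in> R s \<longrightarrow> \<Phi> s a = \<Phi> s b)"

lemma quot_map_class:
  assumes "rel_on X R" "rel_invariant R \<Phi>" "a \<in> fst X s"
  shows "quot_map \<Phi> s (qrel R s `` {a}) = \<Phi> s a"
  unfolding quot_map_def
  using some_in_qrel_class[OF assms(1,3)] qrel_invariant[of R s "\<Phi> s"] assms(2)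
  unfolding rel_invariant_def
  by metis

lemma quot_map_natural:
  assumes "rel_on X R" "rel_invariant R \<Phi>" "psh_closed X" "psh_natural X Y \<Phi>"
  shows "psh_natural (quot_psh X R) Y (quot_map \<Phi>)"
  unfolding psh_natural_def
proof (intro allI impI)
  fix s t m Q assume h: "ishom s t m \<and> Q \<in> fst (quot_psh X R) t"
  then obtain a where a: "a \<in> fst X t" "Q = qrel R t `` {a}"
    using quot_psh_elem[OF assms(1)] by metis
  define b where "b = (SOME x. x \<in> Q)"
  have b: "b \<in> fst X t" "(a, b) \<in> qrel R t"
    using some_in_qrel_class[OF assms(1) a(1)] a(2) b_def by auto
  have Qb: "Q = qrel R t `` {b}" using a(2) qrel_class_eq[OF b(2)] by simp
  have sb: "snd X s t m b \<in> fst X s" using assms(3) h b unfolding psh_closed_def by blast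
  have "quot_map \<Phi> s (snd (quot_psh X R) s t m Q) = \<Phi> s (snd X s t m b)"
    unfolding quot_psh_act b_def[symmetric] using quot_map_class[OF assms(1,2) sb] .
  also have "\<dots> = snd Y s t m (\<Phi> t b)" using assms(4) h b unfolding psh_natural_def by blast
  also have "\<Phi> t b = quot_map \<Phi> t Q" using quot_map_class[OF assms(1,2) b(1)] Qb by simp
  finally show "quot_map \<Phi> s (snd (quot_psh X R) s t m Q) = snd Y s t m (quot_map \<Phi> t Q)" .
qed

lemma bij_betw_quot_map:
  assumes R: "rel_on X R" and \<Phi>: "rel_invariant R \<Phi>"
    and surj: "\<Phi> s ` fst X s = fst Y s"
    and inj: "\<And>a b. a \<in> fst X s \<Longrightarrow> b \<in> fst X s \<Longrightarrow> \<Phi> s a = \<Phi> s b \<Longrightarrow> (a, b) \<in> qrel R s"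
  shows "bij_betw (quot_map \<Phi> s) (fst (quot_psh X R) s) (fst Y s)"
  unfolding bij_betw_def
proof
  show "inj_on (quot_map \<Phi> s) (fst (quot_psh X R) s)"
  proof (rule inj_onI)
    fix P Q assume P: "P \<in> fst (quot_psh X R) s" and Q: "Q \<in> fst (quot_psh X R) s"
      and eq: "quot_map \<Phi> s P = quot_map \<Phi> s Q"
    obtain a where a: "a \<in> fst X s" "P = qrel R s `` {a}" using quot_psh_elem[OF R P] .
    obtain b where b: "b \<in> fst X s" "Q = qrel R s `` {b}" using quot_psh_elem[OF R Q] .
    have "\<Phi> s a = \<Phi> s b"
      using eq quot_map_class[OF R \<Phi> a(1)] quot_map_class[OF R \<Phi> b(1)] a b by simp
    then show "P = Q" using inj[OF a(1) b(1)] a b qrel_class_eq by metis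
  qed
  have "quot_map \<Phi> s ` fst (quot_psh X R) s = \<Phi> s ` fst X s"
  proof (intro equalityI image_subsetI)
    fix Q assume "Q \<in> fst (quot_psh X R) s"
    then obtain a where "a \<in> fst X s" "Q = qrel R s `` {a}" using quot_psh_elem[OF R] by metis
    then show "quot_map \<Phi> s Q \<in> \<Phi> s ` fst X s" using quot_map_class[OF R \<Phi>] by simp
  next
    fix a assume a: "a \<in> fst X s"
    then show "\<Phi> s a \<in> quot_map \<Phi> s ` fst (quot_psh X R) s"
      using quot_map_class[OF R \<Phi> a] class_in_quot_psh[OF a, of R] by (metis image_eqI)
  qed
  then show "quot_map \<Phi> s ` fst (quot_psh X R) s = fst Y s" using surj by simp
qed

lemma quot_psh_iso_by:
  assumes "rel_on X R" "rel_invariant R \<Phi>" "psh_closed X" "psh_natural X Y \<Phi>"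
    and "\<And>s. \<Phi> s ` fst X s = fst Y s"
    and "\<And>s a b. a \<in> fst X s \<Longrightarrow> b \<in> fst X s \<Longrightarrow> \<Phi> s a = \<Phi> s b \<Longrightarrow> (a, b) \<in> qrel R s"
  shows "psh_iso_by (quot_psh X R) Y (quot_map \<Phi>)"
  unfolding psh_iso_by_def
  using quot_map_natural[OF assms(1-4)] bij_betw_quot_map[OF assms(1,2) assms(5,6)] by blast

section \<open>The objects \<theta>^i and the maps between them\<close>

lemma children_T [simp]: "children (T ts) = ts"
  by (simp add: children_def)

definition insert_pt :: "tree list \<Rightarrow> nat \<Rightarrow> tree list" where
  "insert_pt ts i = take i ts @ [T []] @ drop i ts"

lemma theta_i_T: "theta_i (T ts) i = T (insert_pt ts i)"
  by (simp add: theta_i_def children_def insert_pt_def)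

lemma length_insert_pt [simp]: "i \<le> length ts \<Longrightarrow> length (insert_pt ts i) = Suc (length ts)"
  by (simp add: insert_pt_def)

lemma nth_insert_pt:
  "i \<le> length ts \<Longrightarrow> j \<le> length ts \<Longrightarrow>
   insert_pt ts i ! j = (if j < i then ts ! j else if j = i then T [] else ts ! (j - 1))"
  by (auto simp: insert_pt_def nth_append min_def)

definition collapse :: "nat \<Rightarrow> nat \<Rightarrow> nat" where
  "collapse i v = (if v \<le> i then v else v - 1)"

lemma nth_insert_pt_collapse:
  "i \<le> length ts \<Longrightarrow> j \<le> length ts \<Longrightarrow> j \<noteq> i \<Longrightarrow> insert_pt ts i ! j = ts ! collapse i j"
  by (simp add: nth_insert_pt collapse_def)

definition codeg :: "tree list \<Rightarrow> nat \<Rightarrow> hom" where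
  "codeg ts i = mk_hom (Suc (length ts)) (collapse i) (\<lambda>j _. idh (insert_pt ts i ! j))"

lemma base_codeg: "v \<le> Suc (length ts) \<Longrightarrow> base (codeg ts i) ! v = collapse i v"
  by (simp add: codeg_def base_mk_hom)

lemma cell_codeg:
  "j < Suc (length ts) \<Longrightarrow> collapse i j \<le> jj \<Longrightarrow> jj < collapse i (Suc j) \<Longrightarrow>
   cell (codeg ts i) j jj = idh (insert_pt ts i ! j)"
  by (simp add: codeg_def cell_mk_hom)

lemma ishom_codeg:
  assumes i: "i \<le> length ts"
  shows "ishom (T (insert_pt ts i)) (T ts) (codeg ts i)"
proof -
  have "ishom (T (insert_pt ts i)) (T ts) (mk_hom (length (insert_pt ts i)) (collapse i)
          (\<lambda>j _. idh (insert_pt ts i ! j)))"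
  proof (rule ishom_mk_hom)
    fix k j assume k: "k < length (insert_pt ts i)"
      and j: "collapse i k \<le> j" "j < collapse i (Suc k)"
    then have "k \<noteq> i" "j = collapse i k"
      by (auto simp: collapse_def split: if_splits)
    then show "ishom (insert_pt ts i ! k) (ts ! j) (idh (insert_pt ts i ! k))"
      using i k by (auto simp: nth_insert_pt collapse_def ishom_idh)
  qed (use i in \<open>auto simp: collapse_def\<close>)
  then show ?thesis using i by (simp add: codeg_def)
qed

definition skip :: "nat \<Rightarrow> nat \<Rightarrow> nat" where
  "skip sk v = (if v < sk then v else Suc v)"

lemma ins_map_mk_hom:
  "ins_map (T ts) i sk =
     mk_hom (length ts) (skip sk) (\<lambda>k j. if j = i then bang (ts ! k) else idh (ts ! k))"
proof -
  have shift: "map (\<lambda>j. if j = Suc i then bang (ts ! k) else idh (ts ! k)) [Suc a..<Suc b]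
     = map (\<lambda>j. if j = i then bang (ts ! k) else idh (ts ! k)) [a..<b]" for k a b
    by (rule nth_equalityI) (auto simp del: upt_Suc)
  have "ins_map (T ts) i sk = H (map (skip sk) [0..<Suc (length ts)])
     (map (\<lambda>k. map (\<lambda>j. if j = Suc i then bang (ts ! k) else idh (ts ! k))
       [Suc (skip sk k)..<Suc (skip sk (Suc k))]) [0..<length ts])"
    unfolding ins_map_def Let_def children_T skip_def by (rule refl)
  then show ?thesis unfolding mk_hom_def shift .
qed

lemma base_ins_map: "v \<le> length ts \<Longrightarrow> base (ins_map (T ts) i sk) ! v = skip sk v"
  by (simp add: ins_map_mk_hom base_mk_hom)

lemma cell_ins_map:
  "j < length ts \<Longrightarrow> skip sk j \<le> jj \<Longrightarrow> jj < skip sk (Suc j) \<Longrightarrow>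
   cell (ins_map (T ts) i sk) j jj = (if jj = i then bang (ts ! j) else idh (ts ! j))"
  by (simp add: ins_map_mk_hom cell_mk_hom)

lemma ishom_ins_map:
  assumes i: "i \<le> length ts" and sk: "sk = i \<or> sk = Suc i"
  shows "ishom (T ts) (T (insert_pt ts i)) (ins_map (T ts) i sk)"
  unfolding ins_map_mk_hom
proof (rule ishom_mk_hom)
  fix k j assume k: "k < length ts" and j: "skip sk k \<le> j" "j < skip sk (Suc k)"
  show "ishom (ts ! k) (insert_pt ts i ! j) (if j = i then bang (ts ! k) else idh (ts ! k))"
  proof (cases "j = i")
    case True
    then show ?thesis using i by (simp add: nth_insert_pt ishom_bang)
  next
    case False
    then have "j \<le> length ts" "collapse i j = k"
      using j k sk by (auto simp: skip_def collapse_def split: if_splits)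
    then have "insert_pt ts i ! j = ts ! k"
      using False i by (auto simp: nth_insert_pt collapse_def split: if_splits)
    then show ?thesis using False by (simp add: ishom_idh)
  qed
qed (use i in \<open>auto simp: skip_def\<close>)

lemma ishom_alpha: "i < length ts \<Longrightarrow> ishom (T ts) (T (insert_pt ts i)) (alpha (T ts) i)"
  unfolding alpha_def by (rule ishom_ins_map) auto

lemma ishom_beta: "i \<le> length ts \<Longrightarrow> ishom (T ts) (T (insert_pt ts i)) (beta (T ts) i)"
  unfolding beta_def by (rule ishom_ins_map) auto

lemma comp_codeg_ins_map:
  assumes i: "i \<le> length ts" and sk: "sk = i \<or> sk = Suc i"
  shows "comp (codeg ts i) (ins_map (T ts) i sk) = idh (T ts)"
proof -
  note A = ishom_ins_map[OF i sk] and S = ishom_codeg[OF i]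
  have base_eq: "base (comp (codeg ts i) (ins_map (T ts) i sk)) = base (idh (T ts))"
  proof (rule nth_equalityI)
    fix v assume "v < length (base (comp (codeg ts i) (ins_map (T ts) i sk)))"
    then have v: "v \<le> length ts" using ishom_base(1)[OF A] by (simp add: base_comp)
    have "skip sk v \<le> Suc (length ts)" using v by (simp add: skip_def)
    then show "base (comp (codeg ts i) (ins_map (T ts) i sk)) ! v = base (idh (T ts)) ! v"
      using v sk ishom_base(1)[OF A]
      by (auto simp: base_comp base_ins_map base_codeg skip_def collapse_def nth_upt
          simp del: upt_Suc)
  qed (use ishom_base(1)[OF A] in \<open>simp add: base_comp del: upt_Suc\<close>)
  show ?thesis
  proof (rule hom_eqI[OF ishom_comp[OF A S] ishom_idh base_eq])
    fix k jj assume k: "k < length ts"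
      and jj: "base (comp (codeg ts i) (ins_map (T ts) i sk)) ! k \<le> jj"
        "jj < base (comp (codeg ts i) (ins_map (T ts) i sk)) ! Suc k"
    have jj_k: "jj = k" using jj k base_eq by (simp add: nth_upt del: upt_Suc)
    have jj': "base (codeg ts i) ! (base (ins_map (T ts) i sk) ! k) \<le> jj"
      "jj < base (codeg ts i) ! (base (ins_map (T ts) i sk) ! Suc k)"
      using jj k ishom_base(1)[OF A] by (simp_all add: base_comp)
    obtain j where j0: "base (ins_map (T ts) i sk) ! k \<le> j" "j < base (ins_map (T ts) i sk) ! Suc k"
        "base (codeg ts i) ! j \<le> jj" "jj < base (codeg ts i) ! Suc j"
      and cell_eq: "cell (comp (codeg ts i) (ins_map (T ts) i sk)) k jj =
        comp (cell (codeg ts i) j jj) (cell (ins_map (T ts) i sk) k j)"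
      by (rule obtain_cell_comp[OF A S k jj'])
    have "Suc j \<le> Suc (length ts)"
      using j0(2) k by (simp add: base_ins_map skip_def split: if_splits)
    then have j: "skip sk k \<le> j" "j < skip sk (Suc k)" "collapse i j \<le> jj" "jj < collapse i (Suc j)"
      using j0 k base_codeg[of j ts i] base_codeg[of "Suc j" ts i] by (simp_all add: base_ins_map)
    have jl: "j \<le> length ts" and ji: "j \<noteq> i"
      using j k by (auto simp: skip_def collapse_def split: if_splits)
    have "collapse i j = k"
      using j(3,4) ji jj_k by (auto simp: collapse_def split: if_splits)
    then have "insert_pt ts i ! j = ts ! k"
      using nth_insert_pt_collapse[OF i jl ji] by simp
    then show "cell (comp (codeg ts i) (ins_map (T ts) i sk)) k jj = cell (idh (T ts)) k jj"
      using cell_eq cell_codeg[of j ts i jj] cell_ins_map[OF k j(1,2)] ji jl j jj_k k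
        comp_idh_left[OF ishom_idh] cell_idh[OF k] by simp
  qed
qed

text \<open>The lift of x along codeg in which G selects the vertices lying above the inserted one.\<close>
definition lift :: "nat \<Rightarrow> (nat \<Rightarrow> bool) \<Rightarrow> tree list \<Rightarrow> hom \<Rightarrow> hom" where
  "lift i G xs x = mk_hom (length xs) (\<lambda>k. base x ! k + (if G k then 1 else 0))
     (\<lambda>k j. if j = i then bang (xs ! k) else cell x k (collapse i j))"

definition splits :: "nat \<Rightarrow> (nat \<Rightarrow> bool) \<Rightarrow> tree list \<Rightarrow> hom \<Rightarrow> bool" where
  "splits i G xs x \<longleftrightarrow> (\<forall>k\<le>length xs. (G k \<longrightarrow> i \<le> base x ! k) \<and> (\<not> G k \<longrightarrow> base x ! k \<le> i))"

definition up_closed :: "(nat \<Rightarrow> bool) \<Rightarrow> tree list \<Rightarrow> bool" where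
  "up_closed G xs \<longleftrightarrow> (\<forall>k l. k \<le> l \<longrightarrow> l \<le> length xs \<longrightarrow> G k \<longrightarrow> G l)"

lemma base_lift: "k \<le> length xs \<Longrightarrow> base (lift i G xs x) ! k = base x ! k + (if G k then 1 else 0)"
  by (simp add: lift_def base_mk_hom)

lemma length_base_lift [simp]: "length (base (lift i G xs x)) = Suc (length xs)"
  by (simp add: lift_def)

lemma cell_lift:
  "k < length xs \<Longrightarrow> base x ! k + (if G k then 1 else 0) \<le> j \<Longrightarrow>
   j < base x ! Suc k + (if G (Suc k) then 1 else 0) \<Longrightarrow>
   cell (lift i G xs x) k j = (if j = i then bang (xs ! k) else cell x k (collapse i j))"
  by (simp add: lift_def cell_mk_hom)

lemma lift_cong: "(\<And>k. k \<le> length xs \<Longrightarrow> G k = G' k) \<Longrightarrow> lift i G xs x = lift i G' xs x"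
  unfolding lift_def mk_hom_def by (simp del: upt_Suc)

lemma ishom_lift:
  assumes x: "ishom (T xs) (T ts) x" and i: "i \<le> length ts"
    and G: "splits i G xs x" "up_closed G xs"
  shows "ishom (T xs) (T (insert_pt ts i)) (lift i G xs x)"
  unfolding lift_def
proof (rule ishom_mk_hom)
  fix k j assume k: "k < length xs"
    and j: "base x ! k + (if G k then 1 else 0) \<le> j"
      "j < base x ! Suc k + (if G (Suc k) then 1 else 0)"
  show "ishom (xs ! k) (insert_pt ts i ! j)
      (if j = i then bang (xs ! k) else cell x k (collapse i j))"
  proof (cases "j = i")
    case True
    then show ?thesis using i by (simp add: nth_insert_pt ishom_bang)
  next
    case False
    have "(G k \<longrightarrow> i \<le> base x ! k) \<and> (\<not> G k \<longrightarrow> base x ! k \<le> i)"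
      "(G (Suc k) \<longrightarrow> i \<le> base x ! Suc k) \<and> (\<not> G (Suc k) \<longrightarrow> base x ! Suc k \<le> i)"
      using G(1) k unfolding splits_def by auto
    then have r: "base x ! k \<le> collapse i j" "collapse i j < base x ! Suc k"
      using j False by (auto simp: collapse_def split: if_splits)
    have "j \<le> length ts" using r ishom_base(2)[OF x, of "Suc k"] k False
      by (auto simp: collapse_def split: if_splits)
    then show ?thesis
      using False ishom_cell[OF x k r] nth_insert_pt_collapse[OF i] by simp
  qed
qed (use ishom_base[OF x] i G in \<open>fastforce simp: up_closed_def\<close>)+

lemma comp_codeg_lift:
  assumes x: "ishom (T xs) (T ts) x" and i: "i \<le> length ts"
    and G: "splits i G xs x" "up_closed G xs"
  shows "comp (codeg ts i) (lift i G xs x) = x"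
proof -
  note L = ishom_lift[OF x i G] and S = ishom_codeg[OF i]
  have lift_le: "base (lift i G xs x) ! k \<le> Suc (length ts)" if "k \<le> length xs" for k
    using ishom_base(2)[OF L that] i by simp
  have base_eq: "base (codeg ts i) ! (base (lift i G xs x) ! k) = base x ! k"
    if k: "k \<le> length xs" for k
    using base_codeg[OF lift_le[OF k]] base_lift[OF k] G(1) k
    unfolding splits_def by (auto simp: collapse_def)
  show ?thesis
  proof (rule hom_eqI[OF ishom_comp[OF L S] x])
    show "base (comp (codeg ts i) (lift i G xs x)) = base x"
      using base_eq ishom_base(1)[OF x]
      by (intro nth_equalityI) (auto simp: base_comp less_Suc_eq_le)
  next
    fix k jj assume k: "k < length xs"
      and jj: "base (comp (codeg ts i) (lift i G xs x)) ! k \<le> jj"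
        "jj < base (comp (codeg ts i) (lift i G xs x)) ! Suc k"
    have jj': "base (codeg ts i) ! (base (lift i G xs x) ! k) \<le> jj"
      "jj < base (codeg ts i) ! (base (lift i G xs x) ! Suc k)"
      using jj k by (simp_all add: base_comp)
    obtain j where j: "base (lift i G xs x) ! k \<le> j" "j < base (lift i G xs x) ! Suc k"
        "base (codeg ts i) ! j \<le> jj" "jj < base (codeg ts i) ! Suc j"
      and cell_eq: "cell (comp (codeg ts i) (lift i G xs x)) k jj =
        comp (cell (codeg ts i) j jj) (cell (lift i G xs x) k j)"
      by (rule obtain_cell_comp[OF L S k jj'])
    have jl: "j < Suc (length ts)" using j(2) lift_le[of "Suc k"] k by simp
    have jc: "collapse i j \<le> jj" "jj < collapse i (Suc j)"
      using j(3,4) base_codeg[of j ts i] base_codeg[of "Suc j" ts i] jl by simp_all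
    then have ji: "j \<noteq> i" "jj = collapse i j"
      by (auto simp: collapse_def split: if_splits)
    have r: "base x ! k \<le> jj" "jj < base x ! Suc k"
      using jj k base_eq[of k] base_eq[of "Suc k"] by (simp_all add: base_comp)
    have "cell (lift i G xs x) k j = cell x k jj"
      using ji j(1,2) k cell_lift[OF k] by (simp add: base_lift)
    moreover have "insert_pt ts i ! j = ts ! jj"
      using ji i jl nth_insert_pt_collapse[of i ts j] by simp
    ultimately show "cell (comp (codeg ts i) (lift i G xs x)) k jj = cell x k jj"
      using cell_eq cell_codeg[OF jl jc] comp_idh_left[OF ishom_cell[OF x k r]] by simp
  qed
qed

lemma lift_codeg:
  assumes z: "ishom (T xs) (T (insert_pt ts i)) z" and i: "i \<le> length ts"
  defines "G \<equiv> \<lambda>k. i < base z ! k"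
  shows "splits i G xs (comp (codeg ts i) z)" "up_closed G xs"
    "lift i G xs (comp (codeg ts i) z) = z"
proof -
  note S = ishom_codeg[OF i] and X = ishom_comp[OF z S]
  have z_le: "base z ! k \<le> Suc (length ts)" if "k \<le> length xs" for k
    using ishom_base(2)[OF z that] i by simp
  have base_x: "base (comp (codeg ts i) z) ! k = collapse i (base z ! k)" if "k \<le> length xs" for k
    using z_le[OF that] ishom_base(1)[OF z] that by (simp add: base_comp base_codeg)
  show splits: "splits i G xs (comp (codeg ts i) z)"
    unfolding splits_def G_def using base_x by (auto simp: collapse_def)
  show up: "up_closed G xs"
    unfolding up_closed_def G_def using ishom_base(3)[OF z] by (meson order.strict_trans2)
  note L = ishom_lift[OF X i splits up]
  have base_eq: "base z = base (lift i G xs (comp (codeg ts i) z))"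
    using ishom_base(1)[OF z] base_x
    by (intro nth_equalityI) (auto simp: base_lift G_def collapse_def less_Suc_eq_le)
  show "lift i G xs (comp (codeg ts i) z) = z"
  proof (rule sym, rule hom_eqI[OF z L base_eq])
    fix k j assume k: "k < length xs" and j: "base z ! k \<le> j" "j < base z ! Suc k"
    have jl: "j \<le> length ts" using j(2) z_le[of "Suc k"] k by simp
    have cell_lift: "cell (lift i G xs (comp (codeg ts i) z)) k j =
        (if j = i then bang (xs ! k) else cell (comp (codeg ts i) z) k (collapse i j))"
      using k j base_eq cell_lift[OF k] by (simp add: base_lift)
    show "cell z k j = cell (lift i G xs (comp (codeg ts i) z)) k j"
    proof (cases "j = i")
      case True
      then have "ishom (xs ! k) (T []) (cell z k j)"
        using ishom_cell[OF z k j] i by (simp add: nth_insert_pt)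
      then show ?thesis using True cell_lift ishom_to_point_eq_bang by simp
    next
      case False
      have jc: "collapse i j \<le> collapse i j" "collapse i j < collapse i (Suc j)"
        using False by (auto simp: collapse_def)
      have "cell (comp (codeg ts i) z) k (collapse i j) =
          comp (idh (insert_pt ts i ! j)) (cell z k j)"
        using cell_comp[OF z S k j] jl jc base_codeg[of j ts i] base_codeg[of "Suc j" ts i]
          cell_codeg[of j ts i "collapse i j"] by simp
      then show ?thesis
        using False cell_lift comp_idh_left[OF ishom_cell[OF z k j]] by simp
    qed
  qed
qed

lemma splits_exists:
  assumes x: "ishom (T xs) (T ts) x" and G: "up_closed G xs"
  obtains i where "i \<le> length ts" "splits i G xs x"
proof (cases "\<exists>k\<le>length xs. G k")
  case False
  then have "splits (length ts) G xs x" using ishom_base(2)[OF x] unfolding splits_def by auto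
  then show thesis using that by blast
next
  case True
  define k0 where "k0 = (LEAST k. k \<le> length xs \<and> G k)"
  have k0: "k0 \<le> length xs" "G k0"
    using LeastI_ex[OF True[unfolded Bex_def]] unfolding k0_def by auto
  have k0_min: "k0 \<le> k" if "k \<le> length xs" "G k" for k
    unfolding k0_def using that by (simp add: Least_le)
  have G_iff: "G k \<longleftrightarrow> k0 \<le> k" if "k \<le> length xs" for k
    using that k0 k0_min G unfolding up_closed_def by blast
  have "splits (base x ! k0) G xs x"
    unfolding splits_def
  proof (intro allI impI conjI)
    fix k assume k: "k \<le> length xs"
    show "G k \<Longrightarrow> base x ! k0 \<le> base x ! k" using G_iff[OF k] ishom_base(3)[OF x _ k] by simp
    show "\<not> G k \<Longrightarrow> base x ! k \<le> base x ! k0" using G_iff[OF k] ishom_base(3)[OF x _ k0(1)] by simp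
  qed
  then show thesis using that ishom_base(2)[OF x k0(1)] by blast
qed

lemma splits_between:
  "splits i G xs x \<Longrightarrow> splits j G xs x \<Longrightarrow> i \<le> k \<Longrightarrow> k \<le> j \<Longrightarrow> splits k G xs x"
  unfolding splits_def by (meson order.trans)

lemma comp_ins_map_eq_lift:
  assumes x: "ishom (T xs) (T ts) x" and i: "i \<le> length ts" and sk: "sk = i \<or> sk = Suc i"
  shows "comp (ins_map (T ts) i sk) x = lift i (\<lambda>k. sk \<le> base x ! k) xs x"
proof -
  note A = ishom_ins_map[OF i sk]
  define z where "z = comp (ins_map (T ts) i sk) x"
  have z: "ishom (T xs) (T (insert_pt ts i)) z" unfolding z_def by (rule ishom_comp[OF x A])
  have "comp (codeg ts i) z = x"
    using comp_assoc[OF x A ishom_codeg[OF i]] comp_codeg_ins_map[OF i sk] comp_idh_left[OF x]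
    unfolding z_def by simp
  moreover have "(i < base z ! k) = (sk \<le> base x ! k)" if "k \<le> length xs" for k
    using that sk ishom_base(1,2)[OF x] unfolding z_def
    by (auto simp: base_comp base_ins_map skip_def)
  ultimately have "z = lift i (\<lambda>k. sk \<le> base x ! k) xs x"
    using lift_codeg(3)[OF z i] lift_cong[of xs "\<lambda>k. i < base z ! k" "\<lambda>k. sk \<le> base x ! k"]
    by simp
  then show ?thesis unfolding z_def .
qed

lemma ishom_e_i: "c \<le> length ts \<Longrightarrow> ishom Ic (T (insert_pt ts c)) (e_i c)"
  by (simp add: Ic_def e_i_def ishom_H_iff nth_insert_pt ishom_idh less_Suc_eq nth_Cons')

lemma comp_codeg_e_i: "i \<le> length ts \<Longrightarrow> comp (codeg ts i) (e_i i) = const_hom Ic i"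
proof -
  assume i: "i \<le> length ts"
  have "ishom Ic (T ts) (comp (codeg ts i) (e_i i))"
    using ishom_comp[OF ishom_e_i[OF i] ishom_codeg[OF i]] .
  moreover have "ishom Ic (T ts) (const_hom Ic i)" using ishom_const_hom[OF i] .
  ultimately show ?thesis
    unfolding Ic_def
  proof (rule hom_eqI)
    show "base (comp (codeg ts i) (e_i i)) = base (const_hom (T [T []]) i)"
      using i by (simp add: base_comp e_i_def base_codeg collapse_def const_hom_def)
    fix k j assume "k < length [T []]" "base (comp (codeg ts i) (e_i i)) ! k \<le> j"
      "j < base (comp (codeg ts i) (e_i i)) ! Suc k"
    then show "cell (comp (codeg ts i) (e_i i)) k j = cell (const_hom (T [T []]) i) k j"
      using i by (simp add: base_comp e_i_def base_codeg collapse_def)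
  qed
qed

lemma comp_e_i_eq_lift:
  fixes ts :: "tree list"
  assumes y: "ishom (T xs) Ic y" and c: "c \<le> length ts"
  shows "comp (e_i c) y = lift c (\<lambda>k. base y ! k = 1) xs (const_hom (T xs) c)"
proof -
  note E = ishom_e_i[OF c]
  define z where "z = comp (e_i c) y"
  have z: "ishom (T xs) (T (insert_pt ts c)) z" unfolding z_def by (rule ishom_comp[OF y E])
  have "comp (codeg ts c) z = const_hom (T xs) c"
    using comp_assoc[OF y E ishom_codeg[OF c]] comp_codeg_e_i[OF c] comp_const_hom[OF y]
    unfolding z_def by simp
  moreover have "(c < base z ! k) = (base y ! k = 1)" if "k \<le> length xs" for k
  proof -
    have "base y ! k \<le> 1" using ishom_base(2)[OF y[unfolded Ic_def] that] by simp
    then show ?thesis using that ishom_base(1)[OF y[unfolded Ic_def]] unfolding z_def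
      by (auto simp: base_comp e_i_def less_Suc_eq_le nth_Cons' simp del: One_nat_def)
  qed
  ultimately have "z = lift c (\<lambda>k. base y ! k = 1) xs (const_hom (T xs) c)"
    using lift_codeg(3)[OF z c] lift_cong[of xs "\<lambda>k. c < base z ! k" "\<lambda>k. base y ! k = 1"]
    by simp
  then show ?thesis unfolding z_def .
qed

definition rho :: "tree list \<Rightarrow> nat \<Rightarrow> hom" where
  "rho ts i = mk_hom (Suc (length ts)) (\<lambda>v. if v \<le> i then 0 else 1) (\<lambda>_ _. bang (T []))"

lemma base_rho: "v \<le> Suc (length ts) \<Longrightarrow> base (rho ts i) ! v = (if v \<le> i then 0 else 1)"
  by (simp add: rho_def base_mk_hom)

lemma ishom_rho:
  assumes i: "i \<le> length ts"
  shows "ishom (T (insert_pt ts i)) Ic (rho ts i)"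
proof -
  have "ishom (T (insert_pt ts i)) (T [T []])
      (mk_hom (length (insert_pt ts i)) (\<lambda>v. if v \<le> i then 0 else 1) (\<lambda>_ _. bang (T [])))"
  proof (rule ishom_mk_hom)
    fix k and j :: nat assume "k < length (insert_pt ts i)" "(if k \<le> i then 0 else 1) \<le> j"
      "j < (if Suc k \<le> i then 0 else 1)"
    then have "k = i" "j = 0" by (auto split: if_splits)
    then show "ishom (insert_pt ts i ! k) ([T []] ! j) (bang (T []))"
      using i ishom_bang[of "T []"] by (simp add: nth_insert_pt)
  qed auto
  then show ?thesis using i by (simp add: rho_def Ic_def)
qed

section \<open>Cells of \<theta> \<times> J that are constant or come from I\<close>

type_synonym jcell = "hom \<times> (hom \<Rightarrow> bool)"

definition Jmodel_set :: "tree \<Rightarrow> tree \<Rightarrow> jcell set" where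
  "Jmodel_set \<theta> s = {(x, u). ishom s \<theta> x \<and> u \<in> obs s \<rightarrow>\<^sub>E (UNIV :: bool set) \<and>
     ((\<exists>c. ishom (T []) \<theta> c \<and> x = comp c (bang s)) \<or> (\<exists>y. ishom s Ic y \<and> u = IJ s y))}"

definition Jmodel :: "tree \<Rightarrow> jcell psh" where
  "Jmodel \<theta> = (Jmodel_set \<theta>, \<lambda>s t m (x, u). (comp x m, snd Jpsh s t m u))"

lemma Jpsh_act: "snd Jpsh s t m u = restrict (\<lambda>ob. u (comp m ob)) (obs s)"
  by (simp add: Jpsh_def)

lemma Jmodel_act: "snd (Jmodel \<theta>) s t m (x, u) = (comp x m, restrict (\<lambda>ob. u (comp m ob)) (obs s))"
  by (simp add: Jmodel_def Jpsh_act)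

lemma mem_obs_iff: "ob \<in> obs \<theta> \<longleftrightarrow> ishom (T []) \<theta> ob" by (simp add: obs_def)

lemma comp_mem_obs: "ishom s t m \<Longrightarrow> ob \<in> obs s \<Longrightarrow> comp m ob \<in> obs t"
  unfolding obs_def using ishom_comp by blast

lemma comp_assoc_point:
  "ob \<in> obs s \<Longrightarrow> ishom s t m \<Longrightarrow> ishom t u z \<Longrightarrow> comp (comp z m) ob = comp z (comp m ob)"
  unfolding obs_def using comp_assoc by (metis mem_Collect_eq)

lemma obs_T: "obs (T xs) = {H [k] [] | k. k \<le> length xs}"
  by (auto simp: obs_def ishom_from_point_iff)

definition vertex :: "hom \<Rightarrow> hom \<Rightarrow> nat" where
  "vertex z ob = hd (base (comp z ob))"

lemma vertex_point: "vertex z (H [k] []) = base z ! k"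
  by (cases z) (simp add: vertex_def comp_point)

lemma vertex_restrict_natural:
  assumes m: "ishom s t m" and z: "ishom t t' z"
  shows "restrict (\<lambda>ob. P (vertex (comp z m) ob)) (obs s) =
    snd Jpsh s t m (restrict (\<lambda>ob. P (vertex z ob)) (obs t))"
  unfolding Jpsh_act
proof (rule restrict_ext)
  fix ob assume ob: "ob \<in> obs s"
  then show "P (vertex (comp z m) ob) = restrict (\<lambda>ob. P (vertex z ob)) (obs t) (comp m ob)"
    using comp_mem_obs[OF m ob] comp_assoc_point[OF ob m z] by (simp add: vertex_def)
qed

lemma IJ_in: "IJ s y \<in> obs s \<rightarrow>\<^sub>E (UNIV :: bool set)"
  by (simp add: IJ_def)

lemma IJ_natural: "ishom s t m \<Longrightarrow> ishom t Ic y \<Longrightarrow>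
   IJ s (comp y m) = restrict (\<lambda>ob. IJ t y (comp m ob)) (obs s)"
proof (rule ext)
  fix v assume m: "ishom s t m" and y: "ishom t Ic y"
  show "IJ s (comp y m) v = restrict (\<lambda>ob. IJ t y (comp m ob)) (obs s) v"
  proof (cases "v \<in> obs s")
    case True
    then have "comp m v \<in> obs t" using comp_mem_obs m by blast
    moreover have "comp (comp y m) v = comp y (comp m v)"
    proof -
      have "ishom (T []) s v" using True unfolding obs_def by simp
      then show ?thesis using comp_assoc[OF _ m y] by metis
    qed
    ultimately show ?thesis using True by (simp add: IJ_def)
  qed (simp add: IJ_def)
qed

lemma IJ_point: "k \<le> length xs \<Longrightarrow> IJ (T xs) y (H [k] []) = (base y ! k = 1)"
proof -
  assume k: "k \<le> length xs"
  obtain g ds where y: "y = H g ds" by (cases y)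
  show ?thesis using k unfolding y by (simp add: IJ_def obs_T comp_point)
qed

lemma restrict_eq_IJ:
  assumes "\<And>k. k \<le> length xs \<Longrightarrow> P (H [k] []) = (base y ! k = 1)"
  shows "restrict P (obs (T xs)) = IJ (T xs) y"
proof (rule ext)
  fix ob show "restrict P (obs (T xs)) ob = IJ (T xs) y ob"
  proof (cases "ob \<in> obs (T xs)")
    case True
    then obtain k where "k \<le> length xs" "ob = H [k] []" by (auto simp: obs_T)
    then show ?thesis using True assms IJ_point by simp
  qed (simp add: IJ_def)
qed

lemma IJ_inj:
  assumes y1: "ishom s Ic y1" and y2: "ishom s Ic y2" and e: "IJ s y1 = IJ s y2"
  shows "y1 = y2"
proof -
  obtain xs where s: "s = T xs" by (cases s)
  have y1': "ishom (T xs) (T [T []]) y1" and y2': "ishom (T xs) (T [T []]) y2"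
    using y1 y2 s by (auto simp: Ic_def)
  note u1 = ishom_base[OF y1'] and u2 = ishom_base[OF y2']
  show ?thesis
  proof (rule hom_eqI[OF y1' y2'])
    show "base y1 = base y2"
    proof (rule nth_equalityI)
      show "length (base y1) = length (base y2)" using u1 u2 by simp
      fix k assume k: "k < length (base y1)"
      then have "k \<le> length xs" using u1 by simp
      then have "(base y1 ! k = 1) = (base y2 ! k = 1)" using e IJ_point s by metis
      moreover have "base y1 ! k \<le> 1" "base y2 ! k \<le> 1" using u1 u2 k by auto
      ultimately show "base y1 ! k = base y2 ! k" by linarith
    qed
    fix k j assume k: "k < length xs" and j: "base y1 ! k \<le> j" "j < base y1 ! Suc k"
    have "base y1 ! Suc k \<le> 1" using u1 k by auto
    then have "j = 0" using j by simp
    then have "ishom (xs ! k) (T []) (cell y1 k j)" "ishom (xs ! k) (T []) (cell y2 k j)"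
      using ishom_cell[OF y1' k j] ishom_cell[OF y2' k, of j] j \<open>base y1 = base y2\<close> by auto
    then show "cell y1 k j = cell y2 k j" using ishom_to_point_eq_bang by metis
  qed
qed

lemma IJ_comp_rho:
  assumes i: "i \<le> length ts" and z: "ishom s (T (insert_pt ts i)) z"
  shows "IJ s (comp (rho ts i) z) = restrict (\<lambda>ob. i < vertex z ob) (obs s)"
proof -
  obtain xs where s: "s = T xs" by (cases s)
  have "(i < vertex z (H [k] [])) = (base (comp (rho ts i) z) ! k = 1)" if "k \<le> length xs" for k
    using ishom_base(1,2)[OF z[unfolded s]] that i by (simp add: vertex_point base_comp base_rho)
  then show ?thesis unfolding s by (intro sym[OF restrict_eq_IJ])
qed

lemma up_closed_IJ:
  assumes y: "ishom (T xs) Ic y"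
  shows "up_closed (\<lambda>k. base y ! k = 1) xs"
  unfolding up_closed_def
proof (intro allI impI)
  fix k l assume kl: "k \<le> l" "l \<le> length xs" and "base y ! k = 1"
  moreover have "base y ! k \<le> base y ! l" "base y ! l \<le> 1"
    using ishom_base(2,3)[OF y[unfolded Ic_def]] kl by auto
  ultimately show "base y ! l = 1" by simp
qed

section \<open>\<J>(\<theta>)\<close>

type_synonym jj_elem = "(hom \<times> hom) + (hom \<times> (hom \<Rightarrow> bool))"

definition JJ_sum :: "tree \<Rightarrow> jj_elem psh" where
  "JJ_sum \<theta> = sum_psh (prod_psh (rep \<theta>) Ipsh) (prod_psh (Theta0 \<theta>) Jpsh)"

definition JJ_rel :: "tree \<Rightarrow> tree \<Rightarrow> (jj_elem \<times> jj_elem) set" where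
  "JJ_rel \<theta> s =
     {(Inl ((\<lambda>s (ob, x). (comp ob (bang s), x)) s c), Inr ((\<lambda>s (ob, x). (ob, IJ s x)) s c)) | c.
        c \<in> fst (prod_psh (Theta0 \<theta>) Ipsh) s}"

lemma JJ_quot: "JJ \<theta> = quot_psh (JJ_sum \<theta>) (JJ_rel \<theta>)"
  unfolding JJ_def pushout_def JJ_sum_def JJ_rel_def ..

lemma JJ_sum_carrier:
  "fst (JJ_sum \<theta>) s =
     ({m. ishom s \<theta> m} \<times> {m. ishom s Ic m}) <+> (obs \<theta> \<times> (obs s \<rightarrow>\<^sub>E (UNIV :: bool set)))"
  by (simp add: JJ_sum_def sum_psh_def prod_psh_def rep_def Ipsh_def Theta0_def const_psh_def
      Jpsh_def)

lemma JJ_sum_act_Inl: "snd (JJ_sum \<theta>) s t m (Inl (x, y)) = Inl (comp x m, comp y m)"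
  by (simp add: JJ_sum_def sum_psh_def prod_psh_def rep_def Ipsh_def)

lemma JJ_sum_act_Inr:
  "snd (JJ_sum \<theta>) s t m (Inr (ob, u)) = Inr (ob, restrict (\<lambda>v. u (comp m v)) (obs s))"
  by (simp add: JJ_sum_def sum_psh_def prod_psh_def Theta0_def const_psh_def Jpsh_def)

lemma JJ_rel_iff:
  "(a, b) \<in> JJ_rel \<theta> s \<longleftrightarrow>
     (\<exists>ob x. ob \<in> obs \<theta> \<and> ishom s Ic x \<and> a = Inl (comp ob (bang s), x) \<and> b = Inr (ob, IJ s x))"
  by (auto simp: JJ_rel_def prod_psh_def Theta0_def const_psh_def Ipsh_def rep_def)

definition JJ_to_model :: "tree \<Rightarrow> jj_elem \<Rightarrow> jcell" where
  "JJ_to_model s a = (case a of Inl (x, y) \<Rightarrow> (x, IJ s y) | Inr (ob, u) \<Rightarrow> (comp ob (bang s), u))"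

lemma rel_on_JJ_rel: "rel_on (JJ_sum \<theta>) (JJ_rel \<theta>)"
  unfolding rel_on_def
proof (intro allI impI)
  fix s a b assume "(a, b) \<in> JJ_rel \<theta> s"
  then obtain ob x where h: "ob \<in> obs \<theta>" "ishom s Ic x" "a = Inl (comp ob (bang s), x)"
      "b = Inr (ob, IJ s x)"
    unfolding JJ_rel_iff by blast
  have "ishom s \<theta> (comp ob (bang s))"
    using h(1) ishom_comp[OF ishom_bang] unfolding mem_obs_iff by blast
  then show "a \<in> fst (JJ_sum \<theta>) s \<and> b \<in> fst (JJ_sum \<theta>) s"
    using h IJ_in[of s x] by (simp add: JJ_sum_carrier)
qed

lemma rel_invariant_JJ_to_model: "rel_invariant (JJ_rel \<theta>) JJ_to_model"
  unfolding rel_invariant_def JJ_rel_iff JJ_to_model_def by auto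

lemma psh_closed_JJ_sum: "psh_closed (JJ_sum \<theta>)"
  unfolding psh_closed_def
proof (intro allI impI)
  fix s t m a assume h: "ishom s t m \<and> a \<in> fst (JJ_sum \<theta>) t"
  show "snd (JJ_sum \<theta>) s t m a \<in> fst (JJ_sum \<theta>) s"
  proof (cases a)
    case (Inl p) then obtain x y where "a = Inl (x, y)" by (cases p) auto
    then show ?thesis using h ishom_comp by (auto simp: JJ_sum_carrier JJ_sum_act_Inl)
  next
    case (Inr p) then obtain ob u where "a = Inr (ob, u)" by (cases p) auto
    then show ?thesis using h by (auto simp: JJ_sum_carrier JJ_sum_act_Inr)
  qed
qed

lemma psh_natural_JJ_to_model: "psh_natural (JJ_sum \<theta>) (Jmodel \<theta>) JJ_to_model"
  unfolding psh_natural_def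
proof (intro allI impI)
  fix s t m a assume h: "ishom s t m \<and> a \<in> fst (JJ_sum \<theta>) t"
  show "JJ_to_model s (snd (JJ_sum \<theta>) s t m a) = snd (Jmodel \<theta>) s t m (JJ_to_model t a)"
  proof (cases a)
    case (Inl p) then obtain x y where a: "a = Inl (x, y)" by (cases p) auto
    then have "ishom t Ic y" using h by (auto simp: JJ_sum_carrier)
    then show ?thesis using h a IJ_natural by (simp add: JJ_sum_act_Inl JJ_to_model_def Jmodel_act)
  next
    case (Inr p) then obtain ob u where a: "a = Inr (ob, u)" by (cases p) auto
    then have "ishom (T []) \<theta> ob" using h by (auto simp: JJ_sum_carrier mem_obs_iff)
    then have "comp (comp ob (bang t)) m = comp ob (bang s)" using h comp_const_right by blast
    then show ?thesis using h a by (simp add: JJ_sum_act_Inr JJ_to_model_def Jmodel_act)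
  qed
qed

lemma JJ_to_model_image: "JJ_to_model s ` fst (JJ_sum \<theta>) s = Jmodel_set \<theta> s"
proof
  show "JJ_to_model s ` fst (JJ_sum \<theta>) s \<subseteq> Jmodel_set \<theta> s"
  proof
    fix z assume "z \<in> JJ_to_model s ` fst (JJ_sum \<theta>) s"
    then obtain a where a: "a \<in> fst (JJ_sum \<theta>) s" "z = JJ_to_model s a" by blast
    show "z \<in> Jmodel_set \<theta> s"
    proof (cases a)
      case (Inl p) then obtain x y where "a = Inl (x, y)" by (cases p) auto
      then show ?thesis using a by (auto simp: JJ_sum_carrier JJ_to_model_def Jmodel_set_def IJ_in)
    next
      case (Inr p) then obtain ob u where A: "a = Inr (ob, u)" by (cases p) auto
      then have ob: "ishom (T []) \<theta> ob" and u: "u \<in> obs s \<rightarrow>\<^sub>E (UNIV :: bool set)"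
        using a by (auto simp: JJ_sum_carrier mem_obs_iff)
      have "ishom s \<theta> (comp ob (bang s))" using ishom_comp[OF ishom_bang ob] .
      then show ?thesis using a(2) A ob u unfolding Jmodel_set_def JJ_to_model_def by auto
    qed
  qed
next
  show "Jmodel_set \<theta> s \<subseteq> JJ_to_model s ` fst (JJ_sum \<theta>) s"
  proof
    fix z assume z: "z \<in> Jmodel_set \<theta> s"
    obtain x u where zxu: "z = (x, u)" by (cases z)
    from z zxu have x: "ishom s \<theta> x" and u: "u \<in> obs s \<rightarrow>\<^sub>E (UNIV :: bool set)"
      and d: "(\<exists>c. ishom (T []) \<theta> c \<and> x = comp c (bang s)) \<or> (\<exists>y. ishom s Ic y \<and> u = IJ s y)"
      by (auto simp: Jmodel_set_def)
    from d show "z \<in> JJ_to_model s ` fst (JJ_sum \<theta>) s"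
    proof
      assume "\<exists>c. ishom (T []) \<theta> c \<and> x = comp c (bang s)"
      then obtain c where c: "ishom (T []) \<theta> c" "x = comp c (bang s)" by blast
      have "Inr (c, u) \<in> fst (JJ_sum \<theta>) s" using c u by (simp add: JJ_sum_carrier mem_obs_iff)
      moreover have "JJ_to_model s (Inr (c, u)) = z" using c zxu by (simp add: JJ_to_model_def)
      ultimately show ?thesis by (metis image_eqI)
    next
      assume "\<exists>y. ishom s Ic y \<and> u = IJ s y"
      then obtain y where y: "ishom s Ic y" "u = IJ s y" by blast
      have "Inl (x, y) \<in> fst (JJ_sum \<theta>) s" using x y by (simp add: JJ_sum_carrier)
      moreover have "JJ_to_model s (Inl (x, y)) = z" using y zxu by (simp add: JJ_to_model_def)
      ultimately show ?thesis by (metis image_eqI)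
    qed
  qed
qed

lemma JJ_to_model_eqD:
  assumes a: "a \<in> fst (JJ_sum \<theta>) s" and b: "b \<in> fst (JJ_sum \<theta>) s"
    and e: "JJ_to_model s a = JJ_to_model s b"
  shows "(a, b) \<in> qrel (JJ_rel \<theta>) s"
proof (cases a)
  case (Inl p) then obtain x y where A: "a = Inl (x, y)" by (cases p) auto
  show ?thesis
  proof (cases b)
    case (Inl q) then obtain x' y' where B: "b = Inl (x', y')" by (cases q) auto
    have "x = x'" "IJ s y = IJ s y'" using e A B by (auto simp: JJ_to_model_def)
    moreover have "ishom s Ic y" "ishom s Ic y'" using a b A B by (auto simp: JJ_sum_carrier)
    ultimately have "a = b" using IJ_inj A B by metis
    then show ?thesis by simp
  next
    case (Inr q) then obtain ob u where B: "b = Inr (ob, u)" by (cases q) auto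
    have "x = comp ob (bang s)" "u = IJ s y" using e A B by (auto simp: JJ_to_model_def)
    moreover have "ob \<in> obs \<theta>" "ishom s Ic y" using a b A B by (auto simp: JJ_sum_carrier)
    ultimately have "(a, b) \<in> JJ_rel \<theta> s" unfolding JJ_rel_iff A B by blast
    then show ?thesis by (rule qrel_base)
  qed
next
  case (Inr p) then obtain ob u where A: "a = Inr (ob, u)" by (cases p) auto
  show ?thesis
  proof (cases b)
    case (Inl q) then obtain x y where B: "b = Inl (x, y)" by (cases q) auto
    have "x = comp ob (bang s)" "u = IJ s y" using e A B by (auto simp: JJ_to_model_def)
    moreover have "ob \<in> obs \<theta>" "ishom s Ic y" using a b A B by (auto simp: JJ_sum_carrier)
    ultimately have "(b, a) \<in> JJ_rel \<theta> s" unfolding JJ_rel_iff A B by blast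
    then show ?thesis by (rule qrel_base_sym)
  next
    case (Inr q) then obtain ob' u' where B: "b = Inr (ob', u')" by (cases q) auto
    have "comp ob (bang s) = comp ob' (bang s)" "u = u'" using e A B by (auto simp: JJ_to_model_def)
    moreover have "ishom (T []) \<theta> ob" "ishom (T []) \<theta> ob'"
      using a b A B by (auto simp: JJ_sum_carrier mem_obs_iff)
    ultimately have "a = b" using const_point_inj A B by metis
    then show ?thesis by simp
  qed
qed

lemma psh_iso_by_JJ_model: "psh_iso_by (JJ \<theta>) (Jmodel \<theta>) (quot_map JJ_to_model)"
  unfolding JJ_quot
  by (rule quot_psh_iso_by[OF rel_on_JJ_rel rel_invariant_JJ_to_model psh_closed_JJ_sum
        psh_natural_JJ_to_model])
    (simp_all add: JJ_to_model_image Jmodel_def JJ_to_model_eqD)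

section \<open>\<theta>^i_J\<close>

type_synonym thj_elem = "hom + (hom \<Rightarrow> bool)"

definition thJ_sum :: "tree \<Rightarrow> nat \<Rightarrow> thj_elem psh" where
  "thJ_sum \<theta> i = sum_psh (rep (theta_i \<theta> i)) Jpsh"

definition thJ_rel :: "tree \<Rightarrow> nat \<Rightarrow> tree \<Rightarrow> (thj_elem \<times> thj_elem) set" where
  "thJ_rel \<theta> i s = {(Inl ((\<lambda>s x. comp (e_i i) x) s c), Inr (IJ s c)) | c. c \<in> fst Ipsh s}"

lemma thJ_quot: "thJ \<theta> i = quot_psh (thJ_sum \<theta> i) (thJ_rel \<theta> i)"
  unfolding thJ_def pushout_def thJ_sum_def thJ_rel_def ..

lemma thJ_sum_carrier:
  "fst (thJ_sum \<theta> i) s = {m. ishom s (theta_i \<theta> i) m} <+> (obs s \<rightarrow>\<^sub>E (UNIV :: bool set))"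
  by (simp add: thJ_sum_def sum_psh_def rep_def Jpsh_def)

lemma thJ_sum_act_Inl: "snd (thJ_sum \<theta> i) s t m (Inl z) = Inl (comp z m)"
  by (simp add: thJ_sum_def sum_psh_def rep_def)

lemma thJ_sum_act_Inr:
  "snd (thJ_sum \<theta> i) s t m (Inr u) = Inr (restrict (\<lambda>ob. u (comp m ob)) (obs s))"
  by (simp add: thJ_sum_def sum_psh_def Jpsh_def)

lemma thJ_rel_iff:
  "(a, b) \<in> thJ_rel \<theta> i s \<longleftrightarrow> (\<exists>c. ishom s Ic c \<and> a = Inl (comp (e_i i) c) \<and> b = Inr (IJ s c))"
  by (auto simp: thJ_rel_def Ipsh_def rep_def)

definition thJ_to_model :: "tree \<Rightarrow> nat \<Rightarrow> tree \<Rightarrow> thj_elem \<Rightarrow> jcell" where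
  "thJ_to_model \<theta> i s a = (case a of
       Inl z \<Rightarrow> (comp (codeg (children \<theta>) i) z, restrict (\<lambda>ob. i < vertex z ob) (obs s))
     | Inr u \<Rightarrow> (const_hom s i, u))"

lemma rel_on_thJ_rel: "i \<le> length ts \<Longrightarrow> rel_on (thJ_sum (T ts) i) (thJ_rel (T ts) i)"
  unfolding rel_on_def
proof (intro allI impI)
  fix s a b assume i: "i \<le> length ts" and "(a, b) \<in> thJ_rel (T ts) i s"
  then obtain c where c: "ishom s Ic c" "a = Inl (comp (e_i i) c)" "b = Inr (IJ s c)"
    unfolding thJ_rel_iff by blast
  have "ishom s (theta_i (T ts) i) (comp (e_i i) c)"
    using ishom_comp[OF c(1) ishom_e_i[OF i]] by (simp add: theta_i_T)
  then show "a \<in> fst (thJ_sum (T ts) i) s \<and> b \<in> fst (thJ_sum (T ts) i) s"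
    using c IJ_in[of s c] by (simp add: thJ_sum_carrier)
qed

lemma rel_invariant_thJ_to_model:
  assumes i: "i \<le> length ts"
  shows "rel_invariant (thJ_rel (T ts) i) (thJ_to_model (T ts) i)"
  unfolding rel_invariant_def
proof (intro allI impI)
  fix s a b assume "(a, b) \<in> thJ_rel (T ts) i s"
  then obtain c where c: "ishom s Ic c" "a = Inl (comp (e_i i) c)" "b = Inr (IJ s c)"
    unfolding thJ_rel_iff by blast
  obtain xs where s: "s = T xs" by (cases s)
  have "comp (codeg ts i) (comp (e_i i) c) = const_hom s i"
    using comp_assoc[OF c(1) ishom_e_i[OF i] ishom_codeg[OF i]] comp_codeg_e_i[OF i]
      comp_const_hom[OF c(1)] by simp
  moreover have "(i < vertex (comp (e_i i) c) (H [k] [])) = (base c ! k = 1)"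
    if "k \<le> length xs" for k
  proof -
    have "base c ! k \<le> 1" using ishom_base(2)[OF c(1)[unfolded s Ic_def] that] by simp
    then show ?thesis using ishom_base(1)[OF c(1)[unfolded s Ic_def]] that
      by (auto simp: vertex_point base_comp e_i_def less_Suc_eq_le nth_Cons' simp del: One_nat_def)
  qed
  then have "restrict (\<lambda>ob. i < vertex (comp (e_i i) c) ob) (obs s) = IJ s c"
    unfolding s by (rule restrict_eq_IJ)
  ultimately show "thJ_to_model (T ts) i s a = thJ_to_model (T ts) i s b"
    using c by (simp add: thJ_to_model_def)
qed

lemma psh_closed_thJ_sum: "psh_closed (thJ_sum \<theta> i)"
  unfolding psh_closed_def
proof (intro allI impI)
  fix s t m a assume h: "ishom s t m \<and> a \<in> fst (thJ_sum \<theta> i) t"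
  show "snd (thJ_sum \<theta> i) s t m a \<in> fst (thJ_sum \<theta> i) s"
    using h ishom_comp by (cases a) (auto simp: thJ_sum_carrier thJ_sum_act_Inl thJ_sum_act_Inr)
qed

lemma psh_natural_thJ_to_model:
  assumes i: "i \<le> length ts"
  shows "psh_natural (thJ_sum (T ts) i) (Jmodel (T ts)) (thJ_to_model (T ts) i)"
  unfolding psh_natural_def
proof (intro allI impI)
  fix s t m a assume h: "ishom s t m \<and> a \<in> fst (thJ_sum (T ts) i) t"
  show "thJ_to_model (T ts) i s (snd (thJ_sum (T ts) i) s t m a) =
      snd (Jmodel (T ts)) s t m (thJ_to_model (T ts) i t a)"
  proof (cases a)
    case (Inl z)
    then have z: "ishom t (T (insert_pt ts i)) z" using h by (simp add: thJ_sum_carrier theta_i_T)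
    have "comp (codeg ts i) (comp z m) = comp (comp (codeg ts i) z) m"
      using comp_assoc[OF _ z ishom_codeg[OF i]] h by blast
    then show ?thesis
      using Inl vertex_restrict_natural[OF _ z, of s m "\<lambda>v. i < v"] h
      by (simp add: thJ_sum_act_Inl thJ_to_model_def Jmodel_def)
  next
    case (Inr u)
    have "comp (const_hom t i) m = const_hom s i"
      using comp_const_hom h by blast
    then show ?thesis using Inr by (simp add: thJ_sum_act_Inr thJ_to_model_def Jmodel_act)
  qed
qed

lemma thJ_to_model_in:
  assumes i: "i \<le> length ts" and a: "a \<in> fst (thJ_sum (T ts) i) s"
  shows "thJ_to_model (T ts) i s a \<in> Jmodel_set (T ts) s"
proof (cases a)
  case (Inl z)
  then have z: "ishom s (T (insert_pt ts i)) z" using a by (simp add: thJ_sum_carrier theta_i_T)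
  have y: "ishom s Ic (comp (rho ts i) z)" using ishom_comp[OF z ishom_rho[OF i]] .
  show ?thesis
    using Inl ishom_comp[OF z ishom_codeg[OF i]] IJ_comp_rho[OF i z] y
    unfolding Jmodel_set_def thJ_to_model_def
    by auto
next
  case (Inr u)
  then have "u \<in> obs s \<rightarrow>\<^sub>E (UNIV :: bool set)" using a by (simp add: thJ_sum_carrier)
  then show ?thesis using Inr ishom_const_hom[OF i] ishom_point[OF i]
    unfolding Jmodel_set_def thJ_to_model_def const_hom_def by auto
qed

lemma phi_eq_class: "i \<le> length ts \<Longrightarrow> ishom s (T (insert_pt ts i)) w \<Longrightarrow>
   phi (T ts) i s w = qrel (thJ_rel (T ts) i) s `` {Inl w}"
  unfolding phi_def thJ_quot
  by (rule cls_quot_psh[OF rel_on_thJ_rel]) (simp_all add: thJ_sum_carrier theta_i_T)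

lemma class_in_thJ:
  "i \<le> length ts \<Longrightarrow> a \<in> fst (thJ_sum (T ts) i) s \<Longrightarrow>
   qrel (thJ_rel (T ts) i) s `` {a} \<in> fst (thJ (T ts) i) s"
  unfolding thJ_quot by (rule class_in_quot_psh)

lemma quot_map_thJ_to_model:
  "i \<le> length ts \<Longrightarrow> a \<in> fst (thJ_sum (T ts) i) s \<Longrightarrow>
   quot_map (thJ_to_model (T ts) i) s (qrel (thJ_rel (T ts) i) s `` {a}) =
   thJ_to_model (T ts) i s a"
  by (rule quot_map_class[OF rel_on_thJ_rel rel_invariant_thJ_to_model])

lemma thJ_to_model_ins_map:
  assumes x: "ishom s (T ts) x" and i: "i \<le> length ts" and sk: "sk = i \<or> sk = Suc i"
  shows "thJ_to_model (T ts) i s (Inl (comp (ins_map (T ts) i sk) x)) =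
    (x, restrict (\<lambda>ob. sk \<le> vertex x ob) (obs s))"
proof -
  obtain xs where s: "s = T xs" by (cases s)
  note A = ishom_ins_map[OF i sk]
  have "comp (codeg ts i) (comp (ins_map (T ts) i sk) x) = x"
    using comp_assoc[OF x A ishom_codeg[OF i]] comp_codeg_ins_map[OF i sk] comp_idh_left[OF x]
    by simp
  moreover have "restrict (\<lambda>ob. i < vertex (comp (ins_map (T ts) i sk) x) ob) (obs s) =
      restrict (\<lambda>ob. sk \<le> vertex x ob) (obs s)"
  proof (rule restrict_ext)
    fix ob assume "ob \<in> obs s"
    then obtain k where k: "k \<le> length xs" "ob = H [k] []" using s by (auto simp: obs_T)
    then show "(i < vertex (comp (ins_map (T ts) i sk) x) ob) = (sk \<le> vertex x ob)"
      using ishom_base(1,2)[OF x[unfolded s]] sk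
      by (auto simp: vertex_point base_comp base_ins_map skip_def)
  qed
  ultimately show ?thesis by (simp add: thJ_to_model_def)
qed

lemma psh_closed_thJ: "i \<le> length ts \<Longrightarrow> psh_closed (thJ (T ts) i)"
  unfolding thJ_quot by (rule quot_psh_closed[OF rel_on_thJ_rel psh_closed_thJ_sum])

section \<open>\<J>'(\<theta>)\<close>

type_synonym zig_elem = "nat \<times> (thj_elem set + hom)"

lemma Dzig_carrier:
  "fst (Dzig \<theta>) s =
     {(i, Inl y) | i y. i \<le> length (children \<theta>) \<and> y \<in> fst (thJ \<theta> i) s} \<union>
     {(i, Inr x) | i x. i < length (children \<theta>) \<and> ishom s \<theta> x}"
  by (simp add: Dzig_def rep_def)

lemma Dzig_act_Inl: "snd (Dzig \<theta>) s t m (i, Inl y) = (i, Inl (snd (thJ \<theta> i) s t m y))"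
  by (simp add: Dzig_def)

lemma Dzig_act_Inr: "snd (Dzig \<theta>) s t m (i, Inr x) = (i, Inr (comp x m))"
  by (simp add: Dzig_def rep_def)

lemma Rzig_iff:
  "(a, b) \<in> Rzig \<theta> s \<longleftrightarrow> (\<exists>i x. i < length (children \<theta>) \<and> ishom s \<theta> x \<and> a = (i, Inr x) \<and>
     (b = (i, Inl (phi \<theta> i s (comp (alpha \<theta> i) x))) \<or>
      b = (Suc i, Inl (phi \<theta> (Suc i) s (comp (beta \<theta> (Suc i)) x)))))"
  unfolding Rzig_def rep_def by auto

definition JJ'_to_model :: "tree \<Rightarrow> tree \<Rightarrow> zig_elem \<Rightarrow> jcell" where
  "JJ'_to_model \<theta> s a = (case a of
       (i, Inl Q) \<Rightarrow> quot_map (thJ_to_model \<theta> i) s Q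
     | (i, Inr x) \<Rightarrow> (x, restrict (\<lambda>ob. i < vertex x ob) (obs s)))"

lemma JJ'_to_model_class: "i \<le> length ts \<Longrightarrow> a \<in> fst (thJ_sum (T ts) i) s \<Longrightarrow>
   JJ'_to_model (T ts) s (i, Inl (qrel (thJ_rel (T ts) i) s `` {a})) = thJ_to_model (T ts) i s a"
  by (simp add: JJ'_to_model_def quot_map_thJ_to_model)

lemma phi_ins_map:
  assumes x: "ishom s (T ts) x" and j: "j \<le> length ts" and sk: "sk = j \<or> sk = Suc j"
  defines "a \<equiv> (j, Inl (phi (T ts) j s (comp (ins_map (T ts) j sk) x)))"
  shows "a \<in> fst (Dzig (T ts)) s"
    and "JJ'_to_model (T ts) s a = (x, restrict (\<lambda>ob. sk \<le> vertex x ob) (obs s))"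
proof -
  have w: "ishom s (T (insert_pt ts j)) (comp (ins_map (T ts) j sk) x)"
    using ishom_comp[OF x ishom_ins_map[OF j sk]] .
  then have b: "Inl (comp (ins_map (T ts) j sk) x) \<in> fst (thJ_sum (T ts) j) s"
    by (simp add: thJ_sum_carrier theta_i_T)
  have a: "a = (j, Inl (qrel (thJ_rel (T ts) j) s `` {Inl (comp (ins_map (T ts) j sk) x)}))"
    using phi_eq_class[OF j w] unfolding a_def by simp
  show "a \<in> fst (Dzig (T ts)) s"
    using class_in_thJ[OF j b] j a by (simp add: Dzig_carrier)
  show "JJ'_to_model (T ts) s a = (x, restrict (\<lambda>ob. sk \<le> vertex x ob) (obs s))"
    using a JJ'_to_model_class[OF j b] thJ_to_model_ins_map[OF x j sk] by simp
qed

lemma rel_on_Rzig: "rel_on (Dzig (T ts)) (Rzig (T ts))"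
  unfolding rel_on_def
proof (intro allI impI)
  fix s a b assume "(a, b) \<in> Rzig (T ts) s"
  then obtain i x where i: "i < length ts" and x: "ishom s (T ts) x" and a: "a = (i, Inr x)"
    and b: "b = (i, Inl (phi (T ts) i s (comp (alpha (T ts) i) x))) \<or>
      b = (Suc i, Inl (phi (T ts) (Suc i) s (comp (beta (T ts) (Suc i)) x)))"
    unfolding Rzig_iff by auto
  show "a \<in> fst (Dzig (T ts)) s \<and> b \<in> fst (Dzig (T ts)) s"
    using b i x a phi_ins_map(1)[OF x, of i "Suc i"] phi_ins_map(1)[OF x, of "Suc i" "Suc i"]
    by (auto simp: Dzig_carrier alpha_def beta_def)
qed

lemma rel_invariant_JJ'_to_model: "rel_invariant (Rzig (T ts)) (JJ'_to_model (T ts))"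
  unfolding rel_invariant_def
proof (intro allI impI)
  fix s a b assume "(a, b) \<in> Rzig (T ts) s"
  then obtain i x where i: "i < length ts" and x: "ishom s (T ts) x" and a: "a = (i, Inr x)"
    and b: "b = (i, Inl (phi (T ts) i s (comp (alpha (T ts) i) x))) \<or>
      b = (Suc i, Inl (phi (T ts) (Suc i) s (comp (beta (T ts) (Suc i)) x)))"
    unfolding Rzig_iff by auto
  have "restrict (\<lambda>ob. i < vertex x ob) (obs s) = restrict (\<lambda>ob. Suc i \<le> vertex x ob) (obs s)"
    by (rule restrict_ext) auto
  then show "JJ'_to_model (T ts) s a = JJ'_to_model (T ts) s b"
    using b i a phi_ins_map(2)[OF x, of i "Suc i"] phi_ins_map(2)[OF x, of "Suc i" "Suc i"]
    by (auto simp: JJ'_to_model_def alpha_def beta_def)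
qed

lemma psh_closed_Dzig: "psh_closed (Dzig (T ts))"
  unfolding psh_closed_def
proof (intro allI impI)
  fix s t m a assume h: "ishom s t m \<and> a \<in> fst (Dzig (T ts)) t"
  show "snd (Dzig (T ts)) s t m a \<in> fst (Dzig (T ts)) s"
  proof (cases a)
    case (Pair i z)
    show ?thesis
    proof (cases z)
      case (Inl y)
      then have "i \<le> length ts" "y \<in> fst (thJ (T ts) i) t" using h Pair by (auto simp: Dzig_carrier)
      then have "snd (thJ (T ts) i) s t m y \<in> fst (thJ (T ts) i) s"
        using psh_closed_thJ h unfolding psh_closed_def by blast
      then show ?thesis using Pair Inl \<open>i \<le> length ts\<close> by (simp add: Dzig_act_Inl Dzig_carrier)
    next
      case (Inr x)
      then have "i < length ts" "ishom t (T ts) x" using h Pair by (auto simp: Dzig_carrier)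
      then show ?thesis using Pair Inr h ishom_comp by (simp add: Dzig_act_Inr Dzig_carrier)
    qed
  qed
qed

lemma psh_natural_JJ'_to_model: "psh_natural (Dzig (T ts)) (Jmodel (T ts)) (JJ'_to_model (T ts))"
  unfolding psh_natural_def
proof (intro allI impI)
  fix s t m a assume h: "ishom s t m \<and> a \<in> fst (Dzig (T ts)) t"
  show "JJ'_to_model (T ts) s (snd (Dzig (T ts)) s t m a) =
      snd (Jmodel (T ts)) s t m (JJ'_to_model (T ts) t a)"
  proof (cases a)
    case (Pair i z)
    show ?thesis
    proof (cases z)
      case (Inl y)
      then have i: "i \<le> length ts" and y: "y \<in> fst (thJ (T ts) i) t"
        using h Pair by (auto simp: Dzig_carrier)
      have "psh_natural (thJ (T ts) i) (Jmodel (T ts)) (quot_map (thJ_to_model (T ts) i))"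
        unfolding thJ_quot
        by (rule quot_map_natural[OF rel_on_thJ_rel[OF i] rel_invariant_thJ_to_model[OF i]
              psh_closed_thJ_sum psh_natural_thJ_to_model[OF i]])
      then show ?thesis
        using Pair Inl h y unfolding psh_natural_def by (simp add: Dzig_act_Inl JJ'_to_model_def)
    next
      case (Inr x)
      then have "ishom t (T ts) x" using h Pair by (auto simp: Dzig_carrier)
      then show ?thesis
        using Pair Inr vertex_restrict_natural[of s t m _ x "\<lambda>v. i < v"] h
        by (simp add: Dzig_act_Inr JJ'_to_model_def Jmodel_def)
    qed
  qed
qed

lemma JJ'_to_model_qrel:
  "(a, b) \<in> qrel (Rzig (T ts)) s \<Longrightarrow> JJ'_to_model (T ts) s a = JJ'_to_model (T ts) s b"
  using qrel_invariant[of "Rzig (T ts)" s "JJ'_to_model (T ts) s"] rel_invariant_JJ'_to_model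
  unfolding rel_invariant_def by blast

lemma Dzig_obtain_class:
  assumes a: "a \<in> fst (Dzig (T ts)) s"
  obtains i b where "i \<le> length ts" "b \<in> fst (thJ_sum (T ts) i) s"
    "(a, (i, Inl (qrel (thJ_rel (T ts) i) s `` {b}))) \<in> qrel (Rzig (T ts)) s"
proof -
  obtain i z where a_eq: "a = (i, z)" by (cases a)
  show thesis
  proof (cases z)
    case (Inl Q)
    then have i: "i \<le> length ts" and "Q \<in> fst (thJ (T ts) i) s"
      using a a_eq by (auto simp: Dzig_carrier)
    then obtain b where "b \<in> fst (thJ_sum (T ts) i) s" "Q = qrel (thJ_rel (T ts) i) s `` {b}"
      using quot_psh_elem[OF rel_on_thJ_rel[OF i]] unfolding thJ_quot by metis
    then show thesis using that[OF i] a_eq Inl by simp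
  next
    case (Inr x)
    then have i: "i < length ts" and x: "ishom s (T ts) x"
      using a a_eq by (auto simp: Dzig_carrier)
    have w: "ishom s (T (insert_pt ts i)) (comp (alpha (T ts) i) x)"
      using ishom_comp[OF x ishom_alpha[OF i]] .
    then have "Inl (comp (alpha (T ts) i) x) \<in> fst (thJ_sum (T ts) i) s"
      by (simp add: thJ_sum_carrier theta_i_T)
    moreover have "(a, (i, Inl (qrel (thJ_rel (T ts) i) s `` {Inl (comp (alpha (T ts) i) x)})))
        \<in> Rzig (T ts) s"
      using phi_eq_class[OF _ w] i x a_eq Inr unfolding Rzig_iff by auto
    ultimately show thesis using that[of i] i qrel_base[where R = "Rzig (T ts)"] by simp
  qed
qed

lemma JJ'_to_model_in:
  assumes a: "a \<in> fst (Dzig (T ts)) s"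
  shows "JJ'_to_model (T ts) s a \<in> Jmodel_set (T ts) s"
proof -
  obtain i b where i: "i \<le> length ts" and b: "b \<in> fst (thJ_sum (T ts) i) s"
    and rel: "(a, (i, Inl (qrel (thJ_rel (T ts) i) s `` {b}))) \<in> qrel (Rzig (T ts)) s"
    using Dzig_obtain_class[OF a] .
  show ?thesis
    using JJ'_to_model_qrel[OF rel] JJ'_to_model_class[OF i b] thJ_to_model_in[OF i b] by simp
qed

lemma Jmodel_set_in_image:
  assumes w: "(x, u) \<in> Jmodel_set (T ts) s"
  shows "(x, u) \<in> JJ'_to_model (T ts) s ` fst (Dzig (T ts)) s"
proof -
  obtain xs where s: "s = T xs" by (cases s)
  from w have x: "ishom (T xs) (T ts) x" and u: "u \<in> obs s \<rightarrow>\<^sub>E (UNIV :: bool set)"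
    and cases: "(\<exists>c. ishom (T []) (T ts) c \<and> x = comp c (bang s)) \<or>
      (\<exists>y. ishom s Ic y \<and> u = IJ s y)"
    using s by (auto simp: Jmodel_set_def)
  have in_image: "(x, u) \<in> JJ'_to_model (T ts) s ` fst (Dzig (T ts)) s"
    if i: "i \<le> length ts" and b: "b \<in> fst (thJ_sum (T ts) i) s"
      and image: "thJ_to_model (T ts) i s b = (x, u)" for i b
  proof -
    have "(i, Inl (qrel (thJ_rel (T ts) i) s `` {b})) \<in> fst (Dzig (T ts)) s"
      using class_in_thJ[OF i b] i by (simp add: Dzig_carrier)
    moreover have "JJ'_to_model (T ts) s (i, Inl (qrel (thJ_rel (T ts) i) s `` {b})) = (x, u)"
      using JJ'_to_model_class[OF i b] image by simp
    ultimately show ?thesis by (metis image_eqI)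
  qed
  from cases show ?thesis
  proof
    assume "\<exists>c. ishom (T []) (T ts) c \<and> x = comp c (bang s)"
    then obtain k where k: "k \<le> length ts" "x = const_hom s k"
      unfolding ishom_from_point_iff const_hom_def by blast
    show ?thesis
      using in_image[OF k(1), of "Inr u"] u k by (simp add: thJ_sum_carrier thJ_to_model_def)
  next
    assume "\<exists>y. ishom s Ic y \<and> u = IJ s y"
    then obtain y where y: "ishom (T xs) Ic y" "u = IJ s y" using s by blast
    define G where "G = (\<lambda>k. base y ! k = 1)"
    have G: "up_closed G xs" unfolding G_def by (rule up_closed_IJ[OF y(1)])
    obtain i where i: "i \<le> length ts" "splits i G xs x" using splits_exists[OF x G] .
    have "(i < vertex (lift i G xs x) (H [k] [])) = (base y ! k = 1)" if "k \<le> length xs" for k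
      using i(2) that unfolding splits_def G_def by (auto simp: vertex_point base_lift)
    then have "restrict (\<lambda>ob. i < vertex (lift i G xs x) ob) (obs s) = u"
      unfolding s y(2) by (rule restrict_eq_IJ)
    then show ?thesis
      using in_image[OF i(1), of "Inl (lift i G xs x)"] ishom_lift[OF x i G] s
        comp_codeg_lift[OF x i G]
      by (simp add: thJ_sum_carrier theta_i_T thJ_to_model_def)
  qed
qed

lemma JJ'_to_model_image: "JJ'_to_model (T ts) s ` fst (Dzig (T ts)) s = Jmodel_set (T ts) s"
proof (intro equalityI subsetI)
  fix w assume "w \<in> Jmodel_set (T ts) s"
  then show "w \<in> JJ'_to_model (T ts) s ` fst (Dzig (T ts)) s"
    using Jmodel_set_in_image[of "fst w" "snd w"] by simp
qed (use JJ'_to_model_in in blast)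

definition lift_class :: "tree list \<Rightarrow> tree list \<Rightarrow> nat \<Rightarrow> (nat \<Rightarrow> bool) \<Rightarrow> hom \<Rightarrow> zig_elem"
  where "lift_class ts xs i G x =
    (i, Inl (qrel (thJ_rel (T ts) i) (T xs) `` {Inl (lift i G xs x)}))"

text \<open>Two adjacent admissible positions are identified through the middle copy of \<theta>, since
  there the lifts are \<alpha>^i x and \<beta>^(i+1) x.\<close>
lemma lift_class_Suc:
  assumes x: "ishom (T xs) (T ts) x" and i: "Suc i \<le> length ts"
    and G: "splits i G xs x" "splits (Suc i) G xs x"
  shows "(lift_class ts xs i G x, lift_class ts xs (Suc i) G x) \<in> qrel (Rzig (T ts)) (T xs)"
proof -
  have G_eq: "G k = (Suc i \<le> base x ! k)" if "k \<le> length xs" for k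
    using G that unfolding splits_def by (meson not_less_eq_eq order.trans)
  have "lift i G xs x = comp (alpha (T ts) i) x"
    using comp_ins_map_eq_lift[OF x, of i "Suc i"] lift_cong[OF G_eq] i unfolding alpha_def by simp
  then have alpha:
      "lift_class ts xs i G x = (i, Inl (phi (T ts) i (T xs) (comp (alpha (T ts) i) x)))"
    using phi_eq_class ishom_comp[OF x ishom_alpha] i unfolding lift_class_def by simp
  have "lift (Suc i) G xs x = comp (beta (T ts) (Suc i)) x"
    using comp_ins_map_eq_lift[OF x i, of "Suc i"] lift_cong[OF G_eq] unfolding beta_def by simp
  then have beta: "lift_class ts xs (Suc i) G x =
      (Suc i, Inl (phi (T ts) (Suc i) (T xs) (comp (beta (T ts) (Suc i)) x)))"
    using phi_eq_class[OF i] ishom_comp[OF x ishom_beta[OF i]] unfolding lift_class_def by simp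
  have "((i, Inr x), lift_class ts xs i G x) \<in> Rzig (T ts) (T xs)"
    "((i, Inr x), lift_class ts xs (Suc i) G x) \<in> Rzig (T ts) (T xs)"
    unfolding alpha beta Rzig_iff using i x by auto
  then show ?thesis by (blast intro: qrel_trans qrel_base qrel_base_sym)
qed

lemma lift_class_qrel:
  assumes x: "ishom (T xs) (T ts) x" and ij: "i \<le> j" "j \<le> length ts"
    and G: "splits i G xs x" "splits j G xs x"
  shows "(lift_class ts xs i G x, lift_class ts xs j G x) \<in> qrel (Rzig (T ts)) (T xs)"
  using ij G(2)
proof (induction j rule: dec_induct)
  case (step n)
  have n: "n \<le> length ts" "splits n G xs x"
    using step.prems splits_between[OF G(1) step.prems(2)] step.hyps(1) by auto
  have "(lift_class ts xs i G x, lift_class ts xs n G x) \<in> qrel (Rzig (T ts)) (T xs)"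
    using step.IH n by blast
  moreover have "(lift_class ts xs n G x, lift_class ts xs (Suc n) G x) \<in> qrel (Rzig (T ts)) (T xs)"
    using lift_class_Suc[OF x step.prems(1) n(2) step.prems(2)] .
  ultimately show ?case by (rule qrel_trans)
qed simp

text \<open>A representative of the elements of \<J>'(\<theta>) over (x, u): if u comes from I, the lift of
  x at the least admissible position; otherwise x is constant at some vertex c and u sits in
  \<theta>^c_J.\<close>
definition canon :: "tree list \<Rightarrow> tree list \<Rightarrow> jcell \<Rightarrow> zig_elem" where
  "canon ts xs = (\<lambda>(x, u). let G = (\<lambda>k. u (H [k] [])) in
     if \<exists>y. ishom (T xs) Ic y \<and> u = IJ (T xs) y
     then lift_class ts xs (LEAST i. splits i G xs x) G x
     else (base x ! 0, Inl (qrel (thJ_rel (T ts) (base x ! 0)) (T xs) `` {Inr u})))"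

lemma lift_class_canon:
  assumes x: "ishom (T xs) (T ts) x" and y: "ishom (T xs) Ic y" "u = IJ (T xs) y"
    and i: "i \<le> length ts" "splits i (\<lambda>k. u (H [k] [])) xs x"
  shows "(lift_class ts xs i (\<lambda>k. u (H [k] [])) x, canon ts xs (x, u)) \<in> qrel (Rzig (T ts)) (T xs)"
proof -
  let ?G = "\<lambda>k. u (H [k] [])"
  let ?i0 = "LEAST i. splits i ?G xs x"
  have i0: "splits ?i0 ?G xs x" "?i0 \<le> i" using i(2) by (auto intro: LeastI Least_le)
  have "(lift_class ts xs ?i0 ?G x, lift_class ts xs i ?G x) \<in> qrel (Rzig (T ts)) (T xs)"
    using lift_class_qrel[OF x i0(2) i(1) i0(1) i(2)] .
  moreover have "canon ts xs (x, u) = lift_class ts xs ?i0 ?G x"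
    using y unfolding canon_def Let_def by auto
  ultimately show ?thesis by (simp add: qrel_sym)
qed

lemma qrel_canon_class_Inr:
  assumes i: "i \<le> length ts" and b: "Inr u \<in> fst (thJ_sum (T ts) i) (T xs)"
  defines "a \<equiv> (i, Inl (qrel (thJ_rel (T ts) i) (T xs) `` {Inr u}))"
  shows "(a, canon ts xs (JJ'_to_model (T ts) (T xs) a)) \<in> qrel (Rzig (T ts)) (T xs)"
proof -
  have image: "JJ'_to_model (T ts) (T xs) a = (const_hom (T xs) i, u)"
    using JJ'_to_model_class[OF i b] unfolding a_def by (simp add: thJ_to_model_def)
  show ?thesis
  proof (cases "\<exists>y. ishom (T xs) Ic y \<and> u = IJ (T xs) y")
    case True
    then obtain y where y: "ishom (T xs) Ic y" "u = IJ (T xs) y" by blast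
    have G: "u (H [k] []) = (base y ! k = 1)" if "k \<le> length xs" for k
      using IJ_point[OF that] y(2) by simp
    have "(Inl (comp (e_i i) y), Inr u) \<in> thJ_rel (T ts) i (T xs)"
      using y unfolding thJ_rel_iff by blast
    then have "qrel (thJ_rel (T ts) i) (T xs) `` {Inr u} =
        qrel (thJ_rel (T ts) i) (T xs) `` {Inl (comp (e_i i) y)}"
      by (intro qrel_class_eq qrel_base_sym)
    then have "a = lift_class ts xs i (\<lambda>k. u (H [k] [])) (const_hom (T xs) i)"
      using comp_e_i_eq_lift[OF y(1) i] lift_cong[of xs "\<lambda>k. u (H [k] [])"] G
      unfolding a_def lift_class_def by simp
    moreover have "splits i (\<lambda>k. u (H [k] [])) xs (const_hom (T xs) i)"
      unfolding splits_def by (simp add: base_const_hom)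
    ultimately show ?thesis
      using lift_class_canon[OF ishom_const_hom[OF i] y i] image by simp
  next
    case False
    then have "canon ts xs (const_hom (T xs) i, u) = a"
      unfolding canon_def a_def Let_def by (auto simp: base_const_hom)
    then show ?thesis using image by simp
  qed
qed

lemma qrel_canon_class_Inl:
  assumes i: "i \<le> length ts" and b: "Inl z \<in> fst (thJ_sum (T ts) i) (T xs)"
  defines "a \<equiv> (i, Inl (qrel (thJ_rel (T ts) i) (T xs) `` {Inl z}))"
  shows "(a, canon ts xs (JJ'_to_model (T ts) (T xs) a)) \<in> qrel (Rzig (T ts)) (T xs)"
proof -
  have z: "ishom (T xs) (T (insert_pt ts i)) z"
    using b by (simp add: thJ_sum_carrier theta_i_T)
  define x where "x = comp (codeg ts i) z"
  define u where "u = restrict (\<lambda>ob. i < vertex z ob) (obs (T xs))"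
  have image: "JJ'_to_model (T ts) (T xs) a = (x, u)"
    using JJ'_to_model_class[OF i b] unfolding a_def x_def u_def by (simp add: thJ_to_model_def)
  have G: "u (H [k] []) = (i < base z ! k)" if "k \<le> length xs" for k
    using that unfolding u_def by (simp add: obs_T vertex_point)
  note lifted = lift_codeg[OF z i, folded x_def]
  have "a = lift_class ts xs i (\<lambda>k. u (H [k] [])) x"
    using lifted(3) lift_cong[of xs "\<lambda>k. u (H [k] [])" "\<lambda>k. i < base z ! k" i x] G
    unfolding a_def lift_class_def by simp
  moreover have "splits i (\<lambda>k. u (H [k] [])) xs x"
    using lifted(1) G unfolding splits_def by simp
  moreover have "u = IJ (T xs) (comp (rho ts i) z)"
    unfolding u_def using IJ_comp_rho[OF i z] by simp
  moreover have "ishom (T xs) (T ts) x"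
    unfolding x_def by (rule ishom_comp[OF z ishom_codeg[OF i]])
  ultimately show ?thesis
    using lift_class_canon[OF _ ishom_comp[OF z ishom_rho[OF i]] _ i] image by simp
qed

lemma qrel_canon_class:
  assumes i: "i \<le> length ts" and b: "b \<in> fst (thJ_sum (T ts) i) (T xs)"
  defines "a \<equiv> (i, Inl (qrel (thJ_rel (T ts) i) (T xs) `` {b}))"
  shows "(a, canon ts xs (JJ'_to_model (T ts) (T xs) a)) \<in> qrel (Rzig (T ts)) (T xs)"
  using b qrel_canon_class_Inl[OF i] qrel_canon_class_Inr[OF i] unfolding a_def
  by (cases b) simp_all

lemma qrel_canon:
  assumes a: "a \<in> fst (Dzig (T ts)) (T xs)"
  shows "(a, canon ts xs (JJ'_to_model (T ts) (T xs) a)) \<in> qrel (Rzig (T ts)) (T xs)"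
proof -
  obtain i b where i: "i \<le> length ts" and b: "b \<in> fst (thJ_sum (T ts) i) (T xs)"
    and rel: "(a, (i, Inl (qrel (thJ_rel (T ts) i) (T xs) `` {b}))) \<in> qrel (Rzig (T ts)) (T xs)"
    using Dzig_obtain_class[OF a] .
  show ?thesis
    using qrel_trans[OF rel qrel_canon_class[OF i b]] JJ'_to_model_qrel[OF rel] by simp
qed

lemma JJ'_to_model_eqD:
  assumes a: "a \<in> fst (Dzig (T ts)) s" and b: "b \<in> fst (Dzig (T ts)) s"
    and eq: "JJ'_to_model (T ts) s a = JJ'_to_model (T ts) s b"
  shows "(a, b) \<in> qrel (Rzig (T ts)) s"
proof -
  obtain xs where s: "s = T xs" by (cases s)
  have A: "(a, canon ts xs (JJ'_to_model (T ts) s a)) \<in> qrel (Rzig (T ts)) s"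
    using qrel_canon[of a ts xs] a s by simp
  have B: "(b, canon ts xs (JJ'_to_model (T ts) s a)) \<in> qrel (Rzig (T ts)) s"
    using qrel_canon[of b ts xs] b s eq by simp
  show ?thesis using qrel_trans[OF A qrel_sym[OF B]] .
qed

lemma JJ'_quot: "JJ' \<theta> = quot_psh (Dzig \<theta>) (Rzig \<theta>)"
  by (simp add: JJ'_def)

lemma psh_iso_by_JJ'_model:
  "psh_iso_by (JJ' (T ts)) (Jmodel (T ts)) (quot_map (JJ'_to_model (T ts)))"
  unfolding JJ'_quot
  by (rule quot_psh_iso_by[OF rel_on_Rzig rel_invariant_JJ'_to_model psh_closed_Dzig
        psh_natural_JJ'_to_model])
    (simp_all add: JJ'_to_model_image Jmodel_def JJ'_to_model_eqD)

lemma psh_closed_JJ': "psh_closed (JJ' (T ts))"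
  unfolding JJ'_quot by (rule quot_psh_closed[OF rel_on_Rzig psh_closed_Dzig])

theorem proposition3p13:
  fixes n :: nat and \<theta> :: tree
  assumes "1 \<le> n" and "obj n \<theta>"
  shows "psh_iso n (JJ \<theta>) (JJ' \<theta>)"
proof -
  \<comment> \<open>Both isomorphisms are natural on all trees.\<close>
  obtain ts where \<theta>: "\<theta> = T ts" by (cases \<theta>)
  have "psh_iso_by (Jmodel (T ts)) (JJ' (T ts))
      (\<lambda>s. inv_into (fst (JJ' (T ts)) s) (quot_map (JJ'_to_model (T ts)) s))"
    using psh_iso_by_inv[OF psh_iso_by_JJ'_model psh_closed_JJ'] .
  from psh_iso_by_comp[OF psh_iso_by_JJ_model this] show ?thesis
    unfolding \<theta> by (rule psh_iso_by_imp_psh_iso)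
qed

end
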